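(* Let $P$ be a convex euclidean $p$-gon, and let $r\le p-1$ be the rank of the abelian group generated by the translations in the sides of $P$. Then the complexity $f(n)$ of the outer billiard about $P$ satisfies $f(n)\prec n^{r+2}$.
   Context: The translations in the sides of $P$ are the compositions $T_aT_b$ of point reflections $T_a(x)=2a-x$, $T_b(x)=2b-x$ in the endpoints $a,b$ of a side (translations by $2(a-b)$). Outer billiard: $X=\mathbb R^2\setminus P$ is partitioned by the rays extending the sides of $P$ (ray extending side $ab$ beyond $a$, vertices counterclockwise) into regions $X_a$ indexed by vertices ($X_a$ = points $x$ such that the line through $x$ and $a$ supports $P$ with $P$ on a fixed side); the map is $T=T_a$ on $X_a$. A point is regular if no iterate lies on the rays; its length-$n$ code is the word $a_1\cdots a_n$ with $T^{i-1}x\in X_{a_i}$; $f(n)$ is the number of distinct codes of length $n$. $g\prec h$ means $g(n)\le Ch(n)$ for some $C$ and all large $n$. *)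

theory Defs
  imports "HOL-Analysis.Analysis"
begin

text \<open>The euclidean plane is modelled by the complex numbers.
  cross a b is the signed area (2D cross product) of a and b.\<close>

definition cross :: "complex \<Rightarrow> complex \<Rightarrow> real" where
  "cross a b = Im (cnj a * b)"

text \<open>A convex euclidean p-gon with vertices v 0, ..., v (p-1), listed counterclockwise
  (indices mod p): every vertex other than the endpoints of a side lies strictly to the
  left of that directed side.\<close>

definition convex_polygon :: "nat \<Rightarrow> (nat \<Rightarrow> complex) \<Rightarrow> bool" where
  "convex_polygon p v \<longleftrightarrow> p \<ge> 3 \<and>
     (\<forall>i<p. \<forall>j<p. j \<noteq> i \<and> j \<noteq> Suc i mod p \<longrightarrow>
        cross (v (Suc i mod p) - v i) (v j - v i) > 0)"

definition polygon :: "nat \<Rightarrow> (nat \<Rightarrow> complex) \<Rightarrow> complex set" where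
  "polygon p v = convex hull (v ` {..<p})"

text \<open>Open region X_a for the vertex a = v i (a point not on the rays extending the sides):
  x lies outside P and the line through x and v i supports P, with all other vertices
  strictly on the left of the directed line from x to v i.\<close>

definition in_region :: "nat \<Rightarrow> (nat \<Rightarrow> complex) \<Rightarrow> complex \<Rightarrow> nat \<Rightarrow> bool" where
  "in_region p v x i \<longleftrightarrow> i < p \<and> x \<notin> polygon p v \<and>
     (\<forall>j<p. j \<noteq> i \<longrightarrow> cross (v i - x) (v j - v i) > 0)"

fun orbit :: "(nat \<Rightarrow> complex) \<Rightarrow> (nat \<Rightarrow> nat) \<Rightarrow> complex \<Rightarrow> nat \<Rightarrow> complex" where
  "orbit v c x 0 = x"
| "orbit v c x (Suc k) = 2 * v (c k) - orbit v c x k"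

text \<open>x is regular with (infinite) code c: the k-th iterate T^k x lies in the open region
  X_(v (c k)), and T^(k+1) x = T_(v (c k)) (T^k x).\<close>

definition regular_code :: "nat \<Rightarrow> (nat \<Rightarrow> complex) \<Rightarrow> complex \<Rightarrow> (nat \<Rightarrow> nat) \<Rightarrow> bool" where
  "regular_code p v x c \<longleftrightarrow> (\<forall>k. in_region p v (orbit v c x k) (c k))"

definition regular :: "nat \<Rightarrow> (nat \<Rightarrow> complex) \<Rightarrow> complex \<Rightarrow> bool" where
  "regular p v x \<longleftrightarrow> (\<exists>c. regular_code p v x c)"

definition complexity :: "nat \<Rightarrow> (nat \<Rightarrow> complex) \<Rightarrow> nat \<Rightarrow> nat" where
  "complexity p v n = card {map c [0..<n] | x c. regular_code p v x c}"

text \<open>The abelian group (subgroup of (C,+)) generated by the translations T_a T_b, i.e.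
  translations by 2(a - b), for the sides ab of P.\<close>

definition side_translation_group :: "nat \<Rightarrow> (nat \<Rightarrow> complex) \<Rightarrow> complex set" where
  "side_translation_group p v =
     {\<Sum>i<p. of_int (k i) * (2 * (v i - v (Suc i mod p))) | k. True}"

definition int_independent :: "complex set \<Rightarrow> bool" where
  "int_independent S \<longleftrightarrow> (\<forall>k :: complex \<Rightarrow> int.
      (\<Sum>s\<in>S. of_int (k s) * s) = 0 \<longrightarrow> (\<forall>s\<in>S. k s = 0))"

definition group_rank :: "complex set \<Rightarrow> nat" where
  "group_rank G = Max {card S | S. S \<subseteq> G \<and> finite S \<and> int_independent S}"

end

theory Submission
  imports Defs
begin

text \<open>Codes of length \<open>n\<close> correspond to the nonempty cells of points whose first \<open>n\<close> iterates
  follow the code; each cell is convex and \<open>T^n\<close> acts on it as \<open>x \<mapsto> \<plusminus>x + \<tau>\<close>, where \<open>\<tau>\<close> is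
  an integer combination of the \<open>2 v i\<close> with coefficients at most \<open>n\<close>. The extensions of a
  code by one letter correspond to the regions met by its image cell, and a connected set
  covered by regions and side rays meets at most one more region than rays. Hence
  \<open>f (n + 1) - f n\<close> is bounded by the number of pairs (code, ray) whose image cell meets the
  ray. The image cells of distinct codes are disjoint (\<open>T\<close> is injective), and the parameters
  of such a ray inside an image cell form an interval whose left end is \<open>0\<close> or a root of one
  of the linear constraints defining the cell; these roots are determined by a translation
  vector, an integer combination of the \<open>2 v i\<close> with coefficients at most \<open>2 n\<close>. There are
  \<open>O(n^(r+1))\<close> such vectors: up to a common multiple they lie in a rank \<open>r\<close> lattice, plus one
  dimension for \<open>2 v 0\<close>. So \<open>f (n + 1) - f n = O(n^(r+1))\<close> and \<open>f n = O(n^(r+2))\<close>.\<close>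

subsection \<open>The cross product\<close>

lemma cross_eq_Re_Im: "cross a b = Re a * Im b - Im a * Re b"
  by (simp add: cross_def)

lemma cross_add_left: "cross (a + b) c = cross a c + cross b c"
  and cross_add_right: "cross a (b + c) = cross a b + cross a c"
  and cross_diff_left: "cross (a - b) c = cross a c - cross b c"
  and cross_diff_right: "cross a (b - c) = cross a b - cross a c"
  and cross_minus_right: "cross a (- c) = - cross a c"
  and cross_scale_left: "cross (of_real s * a) c = s * cross a c"
  and cross_scale_right: "cross a (of_real s * c) = s * cross a c"
  and cross_self [simp]: "cross a a = 0"
  and cross_zero_left [simp]: "cross 0 b = 0"
  and cross_zero_right [simp]: "cross a 0 = 0"
  and cross_swap: "cross a b = - cross b a"
  by (simp_all add: cross_eq_Re_Im algebra_simps)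

lemma cross_plucker: "cross a b * cross d u = cross u b * cross d a + cross a u * cross d b"
  by (simp add: cross_eq_Re_Im algebra_simps)

lemma cross_eq_0_imp_real_multiple:
  assumes "cross e y = 0" "e \<noteq> 0"
  obtains \<mu> :: real where "y = of_real \<mu> * e"
proof
  have h: "Re e * Im y = Im e * Re y" using assms(1) by (simp add: cross_eq_Re_Im)
  have n: "(Re e)\<^sup>2 + (Im e)\<^sup>2 \<noteq> 0" using assms(2)
    by (metis complex_eq_iff sum_power2_eq_zero_iff zero_complex.simps)
  show "y = of_real ((Re e * Re y + Im e * Im y) / ((Re e)\<^sup>2 + (Im e)\<^sup>2)) * e"
    using n h by (intro complex_eqI) (simp_all add: field_simps power2_eq_square)
qed

lemma cross_along_line:
  "cross (a - (\<epsilon> * (b - of_real s * e) + t)) u = cross (a - \<epsilon> * b - t) u + s * cross (\<epsilon> * e) u"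
proof -
  have "a - (\<epsilon> * (b - of_real s * e) + t) = (a - \<epsilon> * b - t) + of_real s * (\<epsilon> * e)"
    by (simp add: algebra_simps)
  then show ?thesis by (simp only: cross_add_left cross_scale_left)
qed

lemma continuous_on_cross [continuous_intros]:
  "continuous_on S f \<Longrightarrow> continuous_on S g \<Longrightarrow> continuous_on S (\<lambda>x. cross (f x) (g x))"
  unfolding cross_eq_Re_Im by (intro continuous_intros)

lemma convex_cross_halfplane: "convex {q. 0 < cross (a - q) u}"
proof (rule convexI)
  fix x y :: complex and s t :: real
  assume x: "x \<in> {q. 0 < cross (a - q) u}" and y: "y \<in> {q. 0 < cross (a - q) u}"
    and st: "0 \<le> s" "0 \<le> t" "s + t = 1"
  have "of_real s + of_real t = (1 :: complex)" using st(3) by (metis of_real_add of_real_1)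
  then have "a - (s *\<^sub>R x + t *\<^sub>R y) = (of_real s + of_real t) * a - (of_real s * x + of_real t * y)"
    by (simp add: scaleR_conv_of_real mult.commute)
  also have "\<dots> = of_real s * (a - x) + of_real t * (a - y)"
    by (simp add: algebra_simps)
  finally have "a - (s *\<^sub>R x + t *\<^sub>R y) = of_real s * (a - x) + of_real t * (a - y)" .
  then have "cross (a - (s *\<^sub>R x + t *\<^sub>R y)) u = s * cross (a - x) u + t * cross (a - y) u"
    by (simp add: cross_add_left cross_scale_left)
  moreover have "0 < s * cross (a - x) u + t * cross (a - y) u"
    using x y st by (cases "s = 0") (auto intro: add_pos_nonneg)
  ultimately show "s *\<^sub>R x + t *\<^sub>R y \<in> {q. 0 < cross (a - q) u}" by simp
qed

subsection \<open>Orbits of compositions of point reflections\<close>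

lemma orbit_eq: "orbit v c x k = (-1) ^ k * x + orbit v c 0 k"
  by (induction k) (auto simp: algebra_simps)

lemma orbit_cong: "(\<And>i. i < k \<Longrightarrow> c i = c' i) \<Longrightarrow> orbit v c x k = orbit v c' x k"
  by (induction k) auto

lemma orbit_affine:
  assumes "s + t = 1"
  shows "orbit v c (s *\<^sub>R x + t *\<^sub>R y) k = s *\<^sub>R orbit v c x k + t *\<^sub>R orbit v c y k"
proof (induction k)
  case (Suc k)
  have "of_real s + of_real t = (1 :: complex)" using assms by (metis of_real_add of_real_1)
  then have "2 * v (c k) = (of_real s + of_real t) * (2 * v (c k))" by simp
  then show ?case using Suc by (simp add: scaleR_conv_of_real algebra_simps)
qed simp

lemma continuous_on_orbit [continuous_intros]: "continuous_on S (\<lambda>x. orbit v c x k)"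
  by (subst orbit_eq) (intro continuous_intros)

subsection \<open>Positive solutions of finitely many linear inequalities\<close>

definition positive_solutions :: "'i set \<Rightarrow> ('i \<Rightarrow> real) \<Rightarrow> ('i \<Rightarrow> real) \<Rightarrow> real set" where
  "positive_solutions I \<alpha> \<beta> = {s. 0 < s \<and> (\<forall>i\<in>I. 0 < \<alpha> i + \<beta> i * s)}"

lemma bdd_below_positive_solutions: "bdd_below (positive_solutions I \<alpha> \<beta>)"
  by (rule bdd_belowI[of _ 0]) (auto simp: positive_solutions_def)

lemma positive_solutions_interval:
  assumes s0: "s0 \<in> positive_solutions I \<alpha> \<beta>"
    and s: "Inf (positive_solutions I \<alpha> \<beta>) < s" "s \<le> s0"
  shows "s \<in> positive_solutions I \<alpha> \<beta>"
proof -
  let ?\<Omega> = "positive_solutions I \<alpha> \<beta>"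
  obtain s1 where s1: "s1 \<in> ?\<Omega>" "s1 < s"
    using s(1) cInf_less_iff[OF _ bdd_below_positive_solutions] s0 by blast
  have "0 < \<alpha> i + \<beta> i * s" if i: "i \<in> I" for i
  proof (cases "0 \<le> \<beta> i")
    case True
    then have "\<beta> i * s1 \<le> \<beta> i * s" using s1 by (intro mult_left_mono) auto
    then show ?thesis using s1 i by (auto simp: positive_solutions_def)
  next
    case False
    then have "\<beta> i * s0 \<le> \<beta> i * s" using s by (intro mult_left_mono_neg) auto
    then show ?thesis using s0 i by (auto simp: positive_solutions_def)
  qed
  moreover have "0 < s" using s1 by (auto simp: positive_solutions_def)
  ultimately show ?thesis by (auto simp: positive_solutions_def)
qed

lemma open_positive_solutions:
  assumes "finite I"
  shows "open (positive_solutions I \<alpha> \<beta>)"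
proof -
  have "positive_solutions I \<alpha> \<beta> = {s. 0 < s} \<inter> (\<Inter>i\<in>I. {s. 0 < \<alpha> i + \<beta> i * s})"
    by (auto simp: positive_solutions_def)
  then show ?thesis
    by (simp only:) (intro open_Int open_INT assms ballI open_Collect_less continuous_intros)
qed

lemma Inf_positive_solutions_notin:
  assumes "finite I"
  shows "Inf (positive_solutions I \<alpha> \<beta>) \<notin> positive_solutions I \<alpha> \<beta>"
  by (rule Inf_notin_open[OF open_positive_solutions[OF assms], where x=0]) (simp add: positive_solutions_def)

text \<open>A constraint that fails at the infimum \<open>\<sigma> > 0\<close> holds on the interval to its right, so it
  vanishes at \<open>\<sigma>\<close>.\<close>

lemma Inf_positive_solutions_root:
  assumes fin: "finite I" and s0: "s0 \<in> positive_solutions I \<alpha> \<beta>"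
  defines "\<sigma> \<equiv> Inf (positive_solutions I \<alpha> \<beta>)"
  shows "\<sigma> = 0 \<or> (\<exists>i\<in>I. \<beta> i \<noteq> 0 \<and> \<sigma> = - \<alpha> i / \<beta> i)"
proof (cases "\<sigma> = 0")
  case False
  let ?\<Omega> = "positive_solutions I \<alpha> \<beta>"
  have "0 \<le> \<sigma>" unfolding \<sigma>_def
    using s0 by (intro cInf_greatest) (auto simp: positive_solutions_def)
  have "\<sigma> \<le> s0" unfolding \<sigma>_def by (rule cInf_lower[OF s0 bdd_below_positive_solutions])
  obtain i where i: "i \<in> I" "\<alpha> i + \<beta> i * \<sigma> \<le> 0"
    using Inf_positive_solutions_notin[OF fin, of \<alpha> \<beta>] False \<open>0 \<le> \<sigma>\<close>
    by (force simp: positive_solutions_def \<sigma>_def)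
  have pos0: "0 < \<alpha> i + \<beta> i * s0" using s0 i by (auto simp: positive_solutions_def)
  have "0 < \<beta> i"
  proof (rule ccontr)
    assume "\<not> 0 < \<beta> i"
    then have "\<beta> i * s0 \<le> \<beta> i * \<sigma>" using \<open>\<sigma> \<le> s0\<close> by (simp add: mult_left_mono_neg)
    then show False using i(2) pos0 by linarith
  qed
  define r where "r = - \<alpha> i / \<beta> i"
  have root: "\<alpha> i + \<beta> i * r = 0" using \<open>0 < \<beta> i\<close> by (simp add: r_def)
  have "\<sigma> = r"
  proof (rule ccontr)
    assume "\<sigma> \<noteq> r"
    have "\<beta> i * \<sigma> \<le> \<beta> i * r" using i(2) root by linarith
    then have "\<sigma> < r" using \<open>0 < \<beta> i\<close> \<open>\<sigma> \<noteq> r\<close> by simp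
    moreover have "\<beta> i * r \<le> \<beta> i * s0" using root pos0 by linarith
    then have "r \<le> s0" using \<open>0 < \<beta> i\<close> by simp
    ultimately have "r \<in> ?\<Omega>" using positive_solutions_interval[OF s0] by (simp add: \<sigma>_def)
    then show False using root i(1) by (auto simp: positive_solutions_def)
  qed
  moreover have "\<beta> i \<noteq> 0" using \<open>0 < \<beta> i\<close> by simp
  ultimately show ?thesis using i(1) r_def by blast
qed simp

subsection \<open>Integer relations and counting lattice points\<close>

lemma sum_eliminate_coordinate:
  fixes K :: "'a \<Rightarrow> nat \<Rightarrow> int" and l :: "'a \<Rightarrow> int" and d :: nat
  assumes "finite S" "s0 \<in> S"
  defines "l' s \<equiv> if s = s0 then - (\<Sum>t\<in>S - {s0}. l t * K t d) else K s0 d * l s"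
  shows "(\<Sum>s\<in>S. l' s * K s i) = (\<Sum>s\<in>S - {s0}. l s * (K s0 d * K s i - K s d * K s0 i))"
proof -
  have "(\<Sum>s\<in>S. l' s * K s i) = l' s0 * K s0 i + (\<Sum>s\<in>S - {s0}. l' s * K s i)"
    using assms(1,2) by (simp add: sum.remove)
  also have "(\<Sum>s\<in>S - {s0}. l' s * K s i) = (\<Sum>s\<in>S - {s0}. K s0 d * l s * K s i)"
    by (intro sum.cong) (auto simp: l'_def)
  also have "l' s0 * K s0 i = - (\<Sum>s\<in>S - {s0}. l s * K s d * K s0 i)"
    by (simp add: l'_def sum_distrib_right)
  finally have "(\<Sum>s\<in>S. l' s * K s i) =
      (\<Sum>s\<in>S - {s0}. K s0 d * l s * K s i) - (\<Sum>s\<in>S - {s0}. l s * K s d * K s0 i)"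
    by simp
  also have "\<dots> = (\<Sum>s\<in>S - {s0}. K s0 d * l s * K s i - l s * K s d * K s0 i)"
    by (rule sum_subtractf[symmetric])
  also have "\<dots> = (\<Sum>s\<in>S - {s0}. l s * (K s0 d * K s i - K s d * K s0 i))"
    by (intro sum.cong) (simp_all add: algebra_simps)
  finally show ?thesis .
qed

text \<open>Integer Gaussian elimination: the coordinate \<open>d\<close> is eliminated by cross-multiplying with
  a vector \<open>s0\<close> whose \<open>d\<close>-th entry is nonzero.\<close>

lemma exists_int_relation:
  fixes K :: "'a \<Rightarrow> nat \<Rightarrow> int"
  assumes "finite S" "d < card S"
  shows "\<exists>l. (\<exists>s\<in>S. l s \<noteq> 0) \<and> (\<forall>i<d. (\<Sum>s\<in>S. l s * K s i) = 0)"
  using assms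
proof (induction d arbitrary: S K)
  case 0
  then have "S \<noteq> {}" by auto
  then obtain s where "s \<in> S" by blast
  then show ?case by (intro exI[of _ "\<lambda>_. 1"]) auto
next
  case (Suc d)
  show ?case
  proof (cases "\<forall>s\<in>S. K s d = 0")
    case True
    obtain l where "\<exists>s\<in>S. l s \<noteq> 0" "\<forall>i<d. (\<Sum>s\<in>S. l s * K s i) = 0"
      using Suc.IH[of S K] Suc.prems by auto
    then show ?thesis using True by (auto simp: less_Suc_eq)
  next
    case False
    then obtain s0 where s0: "s0 \<in> S" "K s0 d \<noteq> 0" by blast
    have "d < card (S - {s0})" using Suc.prems s0(1) by simp
    then obtain l where l: "\<exists>s\<in>S - {s0}. l s \<noteq> 0"
      "\<forall>i<d. (\<Sum>s\<in>S - {s0}. l s * (K s0 d * K s i - K s d * K s0 i)) = 0"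
      using Suc.IH[of "S - {s0}" "\<lambda>s i. K s0 d * K s i - K s d * K s0 i"] Suc.prems(1) by blast
    define l' where "l' s = (if s = s0 then - (\<Sum>t\<in>S - {s0}. l t * K t d) else K s0 d * l s)" for s
    have elim: "(\<Sum>s\<in>S. l' s * K s i) = (\<Sum>s\<in>S - {s0}. l s * (K s0 d * K s i - K s d * K s0 i))" for i
      unfolding l'_def by (rule sum_eliminate_coordinate[OF Suc.prems(1) s0(1)])
    have "\<forall>i<Suc d. (\<Sum>s\<in>S. l' s * K s i) = 0"
      using l(2) by (auto simp: less_Suc_eq elim)
    moreover have "\<exists>s\<in>S. l' s \<noteq> 0" using l(1) s0(2) by (auto simp: l'_def)
    ultimately show ?thesis by blast
  qed
qed

definition int_span :: "nat \<Rightarrow> (nat \<Rightarrow> complex) \<Rightarrow> complex set" where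
  "int_span q g = {\<Sum>i<q. of_int (k i) * g i | k. True}"

definition bounded_int_combinations :: "nat \<Rightarrow> (nat \<Rightarrow> complex) \<Rightarrow> nat \<Rightarrow> complex set" where
  "bounded_int_combinations q h N = {\<Sum>i<q. of_int (\<kappa> i) * h i | \<kappa>. \<forall>i. \<bar>\<kappa> i\<bar> \<le> int N}"

lemma side_translation_group_eq_int_span:
  "side_translation_group p v = int_span p (\<lambda>i. 2 * (v i - v (Suc i mod p)))"
  by (simp add: side_translation_group_def int_span_def)

lemma finite_bounded_int_combinations: "finite (bounded_int_combinations q h N)"
proof -
  define f where "f \<kappa> = (\<Sum>i<q. of_int (\<kappa> i) * h i)" for \<kappa> :: "nat \<Rightarrow> int"
  have "bounded_int_combinations q h N \<subseteq> f ` (PiE {..<q} (\<lambda>_. {- int N..int N}))"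
  proof
    fix t assume "t \<in> bounded_int_combinations q h N"
    then obtain \<kappa> where \<kappa>: "\<forall>i. \<bar>\<kappa> i\<bar> \<le> int N" "t = f \<kappa>"
      by (auto simp: bounded_int_combinations_def f_def)
    have "f \<kappa> = f (restrict \<kappa> {..<q})" unfolding f_def by (intro sum.cong) auto
    moreover have "restrict \<kappa> {..<q} \<in> PiE {..<q} (\<lambda>_. {- int N..int N})"
      using \<kappa>(1) by (simp add: abs_le_iff minus_le_iff)
    ultimately show "t \<in> f ` (PiE {..<q} (\<lambda>_. {- int N..int N}))" using \<kappa>(2) by blast
  qed
  then show ?thesis by (rule finite_subset) (intro finite_imageI finite_PiE; simp)
qed

lemma bounded_int_combinations_mono:
  assumes "M \<le> N"
  shows "bounded_int_combinations q h M \<subseteq> bounded_int_combinations q h N"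
proof
  fix t assume "t \<in> bounded_int_combinations q h M"
  then obtain \<kappa> where \<kappa>: "\<forall>i. \<bar>\<kappa> i\<bar> \<le> int M" "t = (\<Sum>i<q. of_int (\<kappa> i) * h i)"
    by (auto simp: bounded_int_combinations_def)
  have "\<bar>\<kappa> i\<bar> \<le> int N" for i using \<kappa>(1)[rule_format, of i] assms by linarith
  then show "t \<in> bounded_int_combinations q h N"
    using \<kappa>(2) unfolding bounded_int_combinations_def by blast
qed

lemma bounded_int_combinations_uminus:
  assumes "t \<in> bounded_int_combinations q h N"
  shows "- t \<in> bounded_int_combinations q h N"
proof -
  obtain \<kappa> where "\<forall>i. \<bar>\<kappa> i\<bar> \<le> int N" "t = (\<Sum>i<q. of_int (\<kappa> i) * h i)"
    using assms by (auto simp: bounded_int_combinations_def)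
  then show ?thesis unfolding bounded_int_combinations_def
    by (intro CollectI exI[of _ "\<lambda>i. - \<kappa> i"]) (simp add: sum_negf[symmetric])
qed

lemma bounded_int_combinations_add:
  assumes "t \<in> bounded_int_combinations q h M" "t' \<in> bounded_int_combinations q h N"
  shows "t + t' \<in> bounded_int_combinations q h (M + N)"
proof -
  obtain \<kappa> where \<kappa>: "\<forall>i. \<bar>\<kappa> i\<bar> \<le> int M" "t = (\<Sum>i<q. of_int (\<kappa> i) * h i)"
    using assms(1) by (auto simp: bounded_int_combinations_def)
  obtain \<kappa>' where \<kappa>': "\<forall>i. \<bar>\<kappa>' i\<bar> \<le> int N" "t' = (\<Sum>i<q. of_int (\<kappa>' i) * h i)"
    using assms(2) by (auto simp: bounded_int_combinations_def)
  have "\<bar>\<kappa> i + \<kappa>' i\<bar> \<le> int (M + N)" for i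
  proof -
    have "\<bar>\<kappa> i\<bar> \<le> int M" "\<bar>\<kappa>' i\<bar> \<le> int N" using \<kappa>(1) \<kappa>'(1) by blast+
    then show ?thesis using abs_triangle_ineq[of "\<kappa> i" "\<kappa>' i"] by simp
  qed
  moreover have "t + t' = (\<Sum>i<q. of_int (\<kappa> i + \<kappa>' i) * h i)"
    using \<kappa> \<kappa>' by (simp add: sum.distrib[symmetric] algebra_simps)
  ultimately show ?thesis
    unfolding bounded_int_combinations_def by (intro CollectI exI[of _ "\<lambda>i. \<kappa> i + \<kappa>' i"]) auto
qed

lemma card_int_independent_le:
  assumes S: "finite S" "S \<subseteq> int_span q g" "int_independent S"
  shows "card S \<le> q"
proof (rule ccontr)
  assume "\<not> card S \<le> q"
  have "\<forall>s\<in>S. \<exists>k. s = (\<Sum>i<q. of_int (k i) * g i)" using S(2) by (auto simp: int_span_def)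
  then obtain K where K: "\<forall>s\<in>S. s = (\<Sum>i<q. of_int (K s i) * g i)" by metis
  obtain l where l: "\<exists>s\<in>S. l s \<noteq> 0" "\<forall>i<q. (\<Sum>s\<in>S. l s * K s i) = 0"
    using exists_int_relation[OF S(1), of q K] \<open>\<not> card S \<le> q\<close> by auto
  have "(\<Sum>s\<in>S. of_int (l s) * s) = (\<Sum>s\<in>S. of_int (l s) * (\<Sum>i<q. of_int (K s i) * g i))"
    using K by (intro sum.cong) auto
  also have "\<dots> = (\<Sum>s\<in>S. \<Sum>i<q. of_int (l s * K s i) * g i)"
    by (simp add: sum_distrib_left mult.assoc)
  also have "\<dots> = (\<Sum>i<q. of_int (\<Sum>s\<in>S. l s * K s i) * g i)"
    by (subst sum.swap) (simp add: sum_distrib_right)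
  also have "\<dots> = 0" using l(2) by simp
  finally show False using S(3) l(1) by (auto simp: int_independent_def)
qed

lemma group_rank_int_span_attained:
  "\<exists>S0. finite S0 \<and> S0 \<subseteq> int_span q g \<and> int_independent S0 \<and>
     card S0 = group_rank (int_span q g) \<and>
     (\<forall>S. finite S \<and> S \<subseteq> int_span q g \<and> int_independent S \<longrightarrow> card S \<le> group_rank (int_span q g))"
proof -
  define Z where "Z = {card S | S. S \<subseteq> int_span q g \<and> finite S \<and> int_independent S}"
  have Z_iff: "x \<in> Z \<longleftrightarrow> (\<exists>S. x = card S \<and> S \<subseteq> int_span q g \<and> finite S \<and> int_independent S)" for x
    unfolding Z_def by (rule mem_Collect_eq)
  have "finite Z"
    by (rule finite_subset[of _ "{..q}"]) (auto simp: Z_iff intro: card_int_independent_le[of _ q g])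
  moreover have "0 \<in> Z" unfolding Z_iff by (auto simp: int_independent_def intro!: exI[of _ "{}"])
  ultimately have "Max Z \<in> Z" "\<forall>x\<in>Z. x \<le> Max Z" using Max_in by auto
  obtain S0 where S0: "Max Z = card S0" "S0 \<subseteq> int_span q g" "finite S0" "int_independent S0"
    using \<open>Max Z \<in> Z\<close> unfolding Z_iff by blast
  have "card S \<le> Max Z" if "finite S \<and> S \<subseteq> int_span q g \<and> int_independent S" for S
  proof -
    have "card S \<in> Z" unfolding Z_iff using that by blast
    then show ?thesis using \<open>\<forall>x\<in>Z. x \<le> Max Z\<close> by blast
  qed
  moreover have "group_rank (int_span q g) = Max Z" by (simp add: group_rank_def Z_def)
  ultimately show ?thesis using S0 by (intro exI[of _ S0]) auto
qed

lemma int_span_rank_basis: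
  "\<exists>S0. finite S0 \<and> card S0 = group_rank (int_span q g) \<and>
     (\<forall>x\<in>int_span q g. \<exists>M :: int. M \<noteq> 0 \<and> (\<exists>\<mu>. of_int M * x = (\<Sum>s\<in>S0. of_int (\<mu> s) * s)))"
proof -
  obtain S0 where S0: "finite S0" "S0 \<subseteq> int_span q g" "int_independent S0"
    "card S0 = group_rank (int_span q g)"
    and max: "\<forall>S. finite S \<and> S \<subseteq> int_span q g \<and> int_independent S \<longrightarrow> card S \<le> group_rank (int_span q g)"
    using group_rank_int_span_attained[of q g] by blast
  have basis: "\<exists>M :: int. M \<noteq> 0 \<and> (\<exists>\<mu>. of_int M * x = (\<Sum>s\<in>S0. of_int (\<mu> s) * s))"
    if x: "x \<in> int_span q g" for x
  proof (cases "x \<in> S0")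
    case True
    have "of_int 1 * x = (\<Sum>s\<in>S0. if s = x then x else 0)" using True S0(1) by simp
    also have "\<dots> = (\<Sum>s\<in>S0. of_int (if s = x then 1 else 0) * s)" by (intro sum.cong) auto
    finally show ?thesis by (intro exI[of _ 1] conjI exI[of _ "\<lambda>s. if s = x then 1 else 0"]) simp_all
  next
    case False
    have "card (insert x S0) = Suc (group_rank (int_span q g))" using S0(1,4) False by simp
    then have "\<not> int_independent (insert x S0)" using S0(1,2) max x by auto
    then obtain k where k: "(\<Sum>s\<in>insert x S0. of_int (k s) * s) = 0" "\<exists>s\<in>insert x S0. k s \<noteq> 0"
      unfolding int_independent_def by blast
    then have sum0: "of_int (k x) * x + (\<Sum>s\<in>S0. of_int (k s) * s) = 0"
      using S0(1) False by simp
    then have "k x \<noteq> 0" using S0(3) k(2) by (auto simp: int_independent_def)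
    moreover have "of_int (k x) * x = - (\<Sum>s\<in>S0. of_int (k s) * s)"
      using sum0 by (simp add: eq_neg_iff_add_eq_0)
    then have "of_int (k x) * x = (\<Sum>s\<in>S0. of_int (- k s) * s)"
      by (simp add: sum_negf)
    ultimately show ?thesis by (intro exI[of _ "k x"] conjI exI[of _ "\<lambda>s. - k s"])
  qed
  then show ?thesis using S0(1,4) by blast
qed

lemma common_multiple_in_int_span:
  fixes h :: "nat \<Rightarrow> 'a :: comm_ring_1"
  assumes "\<And>i. i < q \<Longrightarrow> \<exists>M :: int. M \<noteq> 0 \<and> (\<exists>\<mu>. of_int M * h i = (\<Sum>s\<in>S. of_int (\<mu> s) * s))"
  shows "\<exists>M :: int. M \<noteq> 0 \<and> (\<exists>\<mu>. \<forall>i<q. of_int M * h i = (\<Sum>s\<in>S. of_int (\<mu> i s) * s))"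
proof -
  have "\<forall>i\<in>{..<q}. \<exists>M. M \<noteq> 0 \<and> (\<exists>\<mu>. of_int M * h i = (\<Sum>s\<in>S. of_int (\<mu> s) * s))"
    using assms by blast
  from bchoice[OF this] obtain Mf
    where Mf: "\<forall>i\<in>{..<q}. Mf i \<noteq> 0 \<and> (\<exists>\<mu>. of_int (Mf i) * h i = (\<Sum>s\<in>S. of_int (\<mu> s) * s))"
    by blast
  then have "\<forall>i\<in>{..<q}. \<exists>\<mu>. of_int (Mf i) * h i = (\<Sum>s\<in>S. of_int (\<mu> s) * s)" by blast
  from bchoice[OF this] obtain \<mu>f
    where \<mu>f: "\<forall>i\<in>{..<q}. of_int (Mf i) * h i = (\<Sum>s\<in>S. of_int (\<mu>f i s) * s)"
    by blast
  define Q where "Q i = (\<Prod>l\<in>{..<q} - {i}. Mf l)" for i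
  show ?thesis
  proof (intro exI[of _ "\<Prod>i<q. Mf i"] conjI exI[of _ "\<lambda>i s. Q i * \<mu>f i s"] allI impI)
    show "(\<Prod>i<q. Mf i) \<noteq> 0" using Mf by simp
    fix i assume "i < q"
    have "(\<Prod>i<q. Mf i) = Q i * Mf i" unfolding Q_def using \<open>i < q\<close> by (subst prod.remove[of _ i]) auto
    then have "of_int (\<Prod>i<q. Mf i) * h i = of_int (Q i) * (of_int (Mf i) * h i)" by simp
    also have "\<dots> = (\<Sum>s\<in>S. of_int (Q i * \<mu>f i s) * s)"
      using \<mu>f \<open>i < q\<close> by (simp add: sum_distrib_left mult.assoc)
    finally show "of_int (\<Prod>i<q. Mf i) * h i = (\<Sum>s\<in>S. of_int (Q i * \<mu>f i s) * s)" .
  qed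
qed

lemma int_combinations_common_multiple:
  fixes h :: "nat \<Rightarrow> 'a :: comm_ring_1"
  assumes S: "finite S"
    and mult: "\<And>i. i < q \<Longrightarrow> \<exists>M :: int. M \<noteq> 0 \<and> (\<exists>\<mu>. of_int M * h i = (\<Sum>s\<in>S. of_int (\<mu> s) * s))"
  shows "\<exists>M :: int. \<exists>B :: nat. M \<noteq> 0 \<and> (\<forall>\<kappa> N. (\<forall>i. \<bar>\<kappa> i\<bar> \<le> int N) \<longrightarrow>
    (\<exists>c. (\<forall>s\<in>S. \<bar>c s\<bar> \<le> int (N * B)) \<and>
        of_int M * (\<Sum>i<q. of_int (\<kappa> i) * h i) = (\<Sum>s\<in>S. of_int (c s) * s)))"
proof -
  obtain M :: int and \<mu> where "M \<noteq> 0" and \<mu>: "\<forall>i<q. of_int M * h i = (\<Sum>s\<in>S. of_int (\<mu> i s) * s)"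
    using common_multiple_in_int_span[where S=S and q=q and h=h, OF mult] by blast
  define B where "B = (\<Sum>i<q. \<Sum>s\<in>S. nat \<bar>\<mu> i s\<bar>)"
  have "\<exists>c. (\<forall>s\<in>S. \<bar>c s\<bar> \<le> int (N * B)) \<and>
      of_int M * (\<Sum>i<q. of_int (\<kappa> i) * h i) = (\<Sum>s\<in>S. of_int (c s) * s)"
    if \<kappa>: "\<forall>i. \<bar>\<kappa> i\<bar> \<le> int N" for \<kappa> N
  proof (intro exI conjI ballI)
    define c where "c s = (\<Sum>i<q. \<kappa> i * \<mu> i s)" for s
    have "of_int M * (\<Sum>i<q. of_int (\<kappa> i) * h i) = (\<Sum>i<q. of_int (\<kappa> i) * (of_int M * h i))"
      by (simp add: sum_distrib_left algebra_simps)
    also have "\<dots> = (\<Sum>i<q. \<Sum>s\<in>S. of_int (\<kappa> i * \<mu> i s) * s)"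
      using \<mu> by (simp add: sum_distrib_left mult.assoc)
    also have "\<dots> = (\<Sum>s\<in>S. of_int (c s) * s)"
      by (subst sum.swap) (simp add: c_def sum_distrib_right)
    finally show "of_int M * (\<Sum>i<q. of_int (\<kappa> i) * h i) = (\<Sum>s\<in>S. of_int (c s) * s)" .
    fix s assume s: "s \<in> S"
    have "\<bar>c s\<bar> \<le> (\<Sum>i<q. \<bar>\<kappa> i\<bar> * \<bar>\<mu> i s\<bar>)"
      unfolding c_def by (rule order_trans[OF sum_abs]) (simp add: abs_mult)
    also have "\<dots> \<le> (\<Sum>i<q. int N * (\<Sum>s'\<in>S. \<bar>\<mu> i s'\<bar>))"
      using \<kappa> S s by (intro sum_mono mult_mono member_le_sum) auto
    also have "\<dots> = int (N * B)" by (simp add: B_def sum_distrib_left)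
    finally show "\<bar>c s\<bar> \<le> int (N * B)" .
  qed
  then show ?thesis using \<open>M \<noteq> 0\<close> by blast
qed

lemma card_le_if_scaled_into_box:
  fixes Y S :: "'a :: {idom, ring_char_0} set"
  assumes S: "finite S" and "M \<noteq> 0"
    and box: "\<And>y. y \<in> Y \<Longrightarrow> \<exists>c. (\<forall>s\<in>S. \<bar>c s\<bar> \<le> int a) \<and> of_int M * y = (\<Sum>s\<in>S. of_int (c s) * s)"
  shows "card Y \<le> (2 * a + 1) ^ card S"
proof -
  define Box where "Box = PiE S (\<lambda>_. {- int a..int a})"
  define \<Phi> where "\<Phi> y = (SOME c. c \<in> Box \<and> of_int M * y = (\<Sum>s\<in>S. of_int (c s) * s))" for y
  have \<Phi>: "\<Phi> y \<in> Box \<and> of_int M * y = (\<Sum>s\<in>S. of_int (\<Phi> y s) * s)" if y: "y \<in> Y" for y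
  proof -
    obtain c where c: "\<forall>s\<in>S. \<bar>c s\<bar> \<le> int a" "of_int M * y = (\<Sum>s\<in>S. of_int (c s) * s)"
      using box[OF y] by blast
    then have "restrict c S \<in> Box \<and> of_int M * y = (\<Sum>s\<in>S. of_int (restrict c S s) * s)"
      by (auto simp: Box_def abs_le_iff minus_le_iff)
    then have "\<exists>c. c \<in> Box \<and> of_int M * y = (\<Sum>s\<in>S. of_int (c s) * s)" by blast
    then show ?thesis unfolding \<Phi>_def by (rule someI_ex)
  qed
  have "inj_on \<Phi> Y"
  proof (rule inj_onI)
    fix y y' assume "y \<in> Y" "y' \<in> Y" "\<Phi> y = \<Phi> y'"
    then have "of_int M * y = (\<Sum>s\<in>S. of_int (\<Phi> y s) * s)" "of_int M * y' = (\<Sum>s\<in>S. of_int (\<Phi> y s) * s)"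
      using \<Phi> by auto
    then have "of_int M * y = of_int M * y'" by simp
    then show "y = y'" using \<open>M \<noteq> 0\<close> by simp
  qed
  then have "card Y \<le> card Box"
    using \<Phi> by (intro card_inj_on_le) (auto simp: Box_def S intro: finite_PiE)
  also have "card Box = (2 * a + 1) ^ card S"
    by (simp add: Box_def card_PiE S nat_add_distrib nat_mult_distrib)
  finally show ?thesis .
qed

text \<open>After multiplication by a common \<open>M \<noteq> 0\<close> the combinations become combinations of a
  maximal independent set, with coefficients in a box of side \<open>O(N)\<close>.\<close>

lemma card_bounded_int_combinations_le:
  assumes h: "\<And>i. i < q \<Longrightarrow> h i \<in> int_span p g"
  shows "\<exists>K. \<forall>N. card (bounded_int_combinations q h N) \<le> K * (N + 1) ^ group_rank (int_span p g)"
proof -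
  obtain S0 where S0: "finite S0" "card S0 = group_rank (int_span p g)"
    and basis: "\<forall>x\<in>int_span p g. \<exists>M :: int. M \<noteq> 0 \<and> (\<exists>\<mu>. of_int M * x = (\<Sum>s\<in>S0. of_int (\<mu> s) * s))"
    using int_span_rank_basis[of p g] by blast
  have mult: "\<exists>M :: int. M \<noteq> 0 \<and> (\<exists>\<mu>. of_int M * h i = (\<Sum>s\<in>S0. of_int (\<mu> s) * s))"
    if "i < q" for i
    using basis h[OF that] by blast
  obtain M :: int and B where "M \<noteq> 0" and comb:
    "\<forall>\<kappa> N. (\<forall>i. \<bar>\<kappa> i\<bar> \<le> int N) \<longrightarrow> (\<exists>c. (\<forall>s\<in>S0. \<bar>c s\<bar> \<le> int (N * B)) \<and>
        of_int M * (\<Sum>i<q. of_int (\<kappa> i) * h i) = (\<Sum>s\<in>S0. of_int (c s) * s))"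
    using int_combinations_common_multiple[where S=S0 and q=q and h=h, OF S0(1) mult] by blast
  have "card (bounded_int_combinations q h N) \<le> (2 * B + 1) ^ card S0 * (N + 1) ^ card S0" for N
  proof -
    have "card (bounded_int_combinations q h N) \<le> (2 * (N * B) + 1) ^ card S0"
      using comb by (intro card_le_if_scaled_into_box[OF S0(1) \<open>M \<noteq> 0\<close>])
        (auto simp: bounded_int_combinations_def)
    also have "\<dots> \<le> ((2 * B + 1) * (N + 1)) ^ card S0"
      by (intro power_mono) (auto simp: algebra_simps)
    also have "\<dots> = (2 * B + 1) ^ card S0 * (N + 1) ^ card S0"
      by (rule power_mult_distrib)
    finally show ?thesis .
  qed
  with S0(2) show ?thesis by auto
qed

lemma bounded_int_combinations_subset_shift:
  "bounded_int_combinations q h N \<subseteq>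
     (\<lambda>(m, y). of_int m * b + y) ` ({- int (q * N)..int (q * N)} \<times> bounded_int_combinations q (\<lambda>i. h i - b) N)"
proof
  fix t assume "t \<in> bounded_int_combinations q h N"
  then obtain \<kappa> where \<kappa>: "\<forall>i. \<bar>\<kappa> i\<bar> \<le> int N" "t = (\<Sum>i<q. of_int (\<kappa> i) * h i)"
    by (auto simp: bounded_int_combinations_def)
  have "\<bar>\<Sum>i<q. \<kappa> i\<bar> \<le> (\<Sum>i<q. int N)"
    using \<kappa>(1) by (intro order_trans[OF sum_abs] sum_mono) auto
  then have "(\<Sum>i<q. \<kappa> i) \<in> {- int (q * N)..int (q * N)}" by (simp add: abs_le_iff)
  moreover have "(\<Sum>i<q. of_int (\<kappa> i) * (h i - b)) \<in> bounded_int_combinations q (\<lambda>i. h i - b) N"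
    using \<kappa>(1) by (auto simp: bounded_int_combinations_def)
  moreover have "t = (\<Sum>i<q. of_int (\<kappa> i) * b + of_int (\<kappa> i) * (h i - b))"
    unfolding \<kappa>(2) by (intro sum.cong) (auto simp: algebra_simps)
  then have "t = of_int (\<Sum>i<q. \<kappa> i) * b + (\<Sum>i<q. of_int (\<kappa> i) * (h i - b))"
    by (simp add: sum.distrib sum_distrib_right)
  ultimately show "t \<in> (\<lambda>(m, y). of_int m * b + y) `
      ({- int (q * N)..int (q * N)} \<times> bounded_int_combinations q (\<lambda>i. h i - b) N)"
    by force
qed

lemma twice_vertex_diff_in_side_translation_group:
  assumes "i < p"
  shows "2 * (v i - v 0) \<in> side_translation_group p v"
proof -
  have "2 * (v i - v 0) = (\<Sum>l<i. 2 * v (Suc l) - 2 * v l)"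
    by (subst sum_lessThan_telescope) (simp add: algebra_simps)
  also have "\<dots> = (\<Sum>l\<in>{l \<in> {..<p}. l < i}. 2 * v (Suc l) - 2 * v l)"
    using assms by (intro sum.cong) auto
  also have "\<dots> = (\<Sum>l<p. if l < i then 2 * v (Suc l) - 2 * v l else 0)"
    by (rule sum.inter_filter) simp
  also have "\<dots> = (\<Sum>l<p. of_int (if l < i then -1 else 0) * (2 * (v l - v (Suc l mod p))))"
    using assms by (intro sum.cong) (auto simp: algebra_simps)
  finally show ?thesis
    unfolding side_translation_group_def by (intro CollectI exI[of _ "\<lambda>l. if l < i then -1 else 0"]) simp
qed

text \<open>The extra factor \<open>N + 1\<close> accounts for the coefficient of \<open>2 v 0\<close>, which is not in the group.\<close>

lemma card_vertex_combinations_le: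
  "\<exists>K. \<forall>N. card (bounded_int_combinations p (\<lambda>i. 2 * v i) N)
    \<le> K * (N + 1) ^ (group_rank (side_translation_group p v) + 1)"
proof -
  define r where "r = group_rank (side_translation_group p v)"
  define h where "h = (\<lambda>i. 2 * v i - 2 * v 0)"
  have "h i \<in> int_span p (\<lambda>i. 2 * (v i - v (Suc i mod p)))" if "i < p" for i
    using twice_vertex_diff_in_side_translation_group[OF that]
    by (simp add: h_def side_translation_group_eq_int_span right_diff_distrib)
  then obtain K where K: "\<forall>N. card (bounded_int_combinations p h N) \<le> K * (N + 1) ^ r"
    using card_bounded_int_combinations_le unfolding r_def side_translation_group_eq_int_span by blast
  have "card (bounded_int_combinations p (\<lambda>i. 2 * v i) N) \<le> (2 * p + 1) * K * (N + 1) ^ (r + 1)" for N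
  proof -
    define Ms where "Ms = {- int (p * N)..int (p * N)}"
    have "card (bounded_int_combinations p (\<lambda>i. 2 * v i) N)
        \<le> card ((\<lambda>(m, y). of_int m * (2 * v 0) + y) ` (Ms \<times> bounded_int_combinations p h N))"
      using bounded_int_combinations_subset_shift[of p "\<lambda>i. 2 * v i" N "2 * v 0"]
      by (intro card_mono) (auto simp: Ms_def h_def finite_bounded_int_combinations)
    also have "\<dots> \<le> card (Ms \<times> bounded_int_combinations p h N)"
      by (intro card_image_le) (auto simp: Ms_def finite_bounded_int_combinations)
    also have "\<dots> = (2 * p * N + 1) * card (bounded_int_combinations p h N)"
      by (simp add: card_cartesian_product Ms_def nat_add_distrib nat_mult_distrib)
    also have "\<dots> \<le> (2 * p * N + 1) * (K * (N + 1) ^ r)"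
      using K by (intro mult_left_mono) auto
    also have "\<dots> \<le> ((2 * p + 1) * (N + 1)) * (K * (N + 1) ^ r)"
      by (intro mult_right_mono) (auto simp: algebra_simps)
    finally show ?thesis by (simp add: algebra_simps)
  qed
  then show ?thesis unfolding r_def by blast
qed

subsection \<open>The regions of the outer billiard map\<close>

lemma convex_hull_supported_at:
  assumes S: "\<And>y. y \<in> S \<Longrightarrow> y \<noteq> a \<Longrightarrow> 0 < cross d (y - a)"
    and q: "q \<in> convex hull S"
  shows "0 < cross d (q - a) \<or> q = a"
proof -
  define H where "H = {y. 0 < cross d (y - a)} \<union> {a}"
  have "convex H"
  proof (rule convexI)
    fix x y :: complex and u w :: real
    assume x: "x \<in> H" and y: "y \<in> H" and uw: "0 \<le> u" "0 \<le> w" "u + w = 1"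
    have "of_real u + of_real w = (1 :: complex)" using uw(3) by (metis of_real_add of_real_1)
    then have "u *\<^sub>R x + w *\<^sub>R y - a = of_real u * (x - a) + of_real w * (y - a)"
      by (simp add: scaleR_conv_of_real algebra_simps) (simp add: distrib_left[symmetric])
    then have F: "cross d (u *\<^sub>R x + w *\<^sub>R y - a) = u * cross d (x - a) + w * cross d (y - a)"
      by (simp add: cross_add_right cross_scale_right)
    have fx: "0 \<le> cross d (x - a)" and fy: "0 \<le> cross d (y - a)" using x y by (auto simp: H_def)
    show "u *\<^sub>R x + w *\<^sub>R y \<in> H"
    proof (cases "0 < u * cross d (x - a) + w * cross d (y - a)")
      case True
      then show ?thesis using F by (simp add: H_def)
    next
      case False
      then have "u * cross d (x - a) = 0" "w * cross d (y - a) = 0"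
        using fx fy uw by (smt (verit) mult_nonneg_nonneg)+
      then have "u = 0 \<or> x = a" "w = 0 \<or> y = a" using x y by (auto simp: H_def)
      then have "u *\<^sub>R x + w *\<^sub>R y = (u + w) *\<^sub>R a" by (auto simp: scaleR_add_left)
      then show ?thesis using uw(3) by (simp add: H_def)
    qed
  qed
  moreover have "S \<subseteq> H" using S by (auto simp: H_def)
  ultimately have "convex hull S \<subseteq> H" by (rule hull_minimal[rotated])
  then show ?thesis using q by (auto simp: H_def)
qed

locale outer_billiard =
  fixes p :: nat and v :: "nat \<Rightarrow> complex"
  assumes convex: "convex_polygon p v"
begin

definition nxt :: "nat \<Rightarrow> nat" where "nxt c = Suc c mod p"
definition prv :: "nat \<Rightarrow> nat" where "prv c = (c + p - 1) mod p"
definition edge :: "nat \<Rightarrow> complex" where "edge c = v (nxt c) - v c"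

text \<open>\<open>region q a\<close> is membership in \<open>X_a\<close> (the condition \<open>q \<notin> P\<close> of \<open>in_region\<close> is implied,
  see \<open>in_region_iff\<close>); \<open>ray c\<close> extends the side from \<open>v c\<close> to \<open>v (nxt c)\<close> beyond \<open>v c\<close>.\<close>

definition side :: "nat \<Rightarrow> complex \<Rightarrow> real" where "side c q = cross (edge c) (q - v c)"

definition region :: "complex \<Rightarrow> nat \<Rightarrow> bool" where
  "region q a \<longleftrightarrow> (\<forall>j<p. j \<noteq> a \<longrightarrow> 0 < cross (v a - q) (v j - v a))"

definition ray_point :: "nat \<Rightarrow> real \<Rightarrow> complex" where "ray_point c s = v c - of_real s * edge c"

definition ray :: "nat \<Rightarrow> complex set" where "ray c = {ray_point c s | s. 0 < s}"

definition wedge :: "nat \<Rightarrow> complex set" where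
  "wedge c = {q. side (prv c) q < 0 \<and> 0 < side (nxt c) q}"

lemma p_ge_3: "p \<ge> 3"
  using convex by (simp add: convex_polygon_def)

lemma side_vertex_pos: "i < p \<Longrightarrow> j < p \<Longrightarrow> j \<noteq> i \<Longrightarrow> j \<noteq> nxt i \<Longrightarrow> 0 < side i (v j)"
  using convex by (simp add: convex_polygon_def side_def edge_def nxt_def)

lemma nxt_less: "nxt c < p" and prv_less: "prv c < p"
  using p_ge_3 by (simp_all add: nxt_def prv_def)

lemma nxt_eq: "c < p \<Longrightarrow> nxt c = (if Suc c = p then 0 else Suc c)"
  by (simp add: nxt_def)

lemma prv_eq: "c < p \<Longrightarrow> prv c = (if c = 0 then p - 1 else c - 1)"
  using p_ge_3 by (cases c) (simp_all add: prv_def)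

lemma nxt_prv: "c < p \<Longrightarrow> nxt (prv c) = c"
  and prv_nxt: "c < p \<Longrightarrow> prv (nxt c) = c"
  and nxt_neq: "c < p \<Longrightarrow> nxt c \<noteq> c"
  and prv_neq: "c < p \<Longrightarrow> prv c \<noteq> c"
  and nxt_neq_prv: "c < p \<Longrightarrow> nxt c \<noteq> prv c"
  using p_ge_3 by (auto simp: nxt_eq prv_eq)

lemma side_self [simp]: "side c (v c) = 0"
  and side_nxt [simp]: "side c (v (nxt c)) = 0"
  by (simp_all add: side_def edge_def)

lemma side_prv: "c < p \<Longrightarrow> side (prv c) q = cross (edge (prv c)) (q - v c)"
proof -
  assume "c < p"
  then have "q - v (prv c) = (q - v c) + edge (prv c)" using nxt_prv by (simp add: edge_def)
  then show ?thesis unfolding side_def by (simp only: cross_add_right cross_self add_0_right)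
qed

lemma edge_nonzero: "c < p \<Longrightarrow> edge c \<noteq> 0"
proof
  assume c: "c < p" and "edge c = 0"
  have "0 < side c (v (prv c))"
    using side_vertex_pos[OF c prv_less prv_neq[OF c]] nxt_neq_prv[OF c] by auto
  then show False using \<open>edge c = 0\<close> by (simp add: side_def)
qed

lemma cross_edge_prv_edge_pos: "c < p \<Longrightarrow> 0 < cross (edge (prv c)) (edge c)"
proof -
  assume c: "c < p"
  have "0 < side (prv c) (v (nxt c))"
    using side_vertex_pos[of "prv c" "nxt c"] c prv_less nxt_less nxt_neq_prv nxt_prv nxt_neq by metis
  moreover have "v (nxt c) - v c = edge c" by (simp add: edge_def)
  ultimately show ?thesis using c by (simp add: side_prv)
qed

lemma region_not_in_polygon:
  assumes "a < p" "region q a"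
  shows "q \<notin> polygon p v"
proof
  assume "q \<in> polygon p v"
  then have "0 < cross (v a - q) (q - v a) \<or> q = v a"
    using assms unfolding polygon_def region_def
    by (intro convex_hull_supported_at[of "v ` {..<p}"]) auto
  moreover have "cross (v a - q) (q - v a) = 0" by (simp add: cross_eq_Re_Im algebra_simps)
  ultimately have "q = v a" by simp
  moreover have "0 < cross (v a - q) (v (nxt a) - v a)"
    using assms nxt_less nxt_neq by (simp add: region_def)
  ultimately show False by simp
qed

lemma in_region_iff: "in_region p v q a \<longleftrightarrow> a < p \<and> region q a"
  using region_not_in_polygon by (auto simp: in_region_def region_def)

lemma region_unique: "a < p \<Longrightarrow> b < p \<Longrightarrow> region q a \<Longrightarrow> region q b \<Longrightarrow> a = b"
proof (rule ccontr)
  assume "a < p" "b < p" "region q a" "region q b" "a \<noteq> b"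
  then have "0 < cross (v a - q) (v b - v a)" "0 < cross (v b - q) (v a - v b)"
    by (auto simp: region_def)
  moreover have "cross (v a - q) (v b - v a) + cross (v b - q) (v a - v b) = 0"
    by (simp add: cross_eq_Re_Im algebra_simps)
  ultimately show False by simp
qed

text \<open>Injectivity of the billiard map: the images \<open>T_a X_a\<close> are pairwise disjoint.\<close>

lemma reflected_region_unique:
  "a < p \<Longrightarrow> b < p \<Longrightarrow> region (2 * v a - z) a \<Longrightarrow> region (2 * v b - z) b \<Longrightarrow> a = b"
proof (rule ccontr)
  assume "a < p" "b < p" "region (2 * v a - z) a" "region (2 * v b - z) b" "a \<noteq> b"
  then have "0 < cross (z - v a) (v b - v a)" "0 < cross (z - v b) (v a - v b)"
    by (auto simp: region_def algebra_simps)
  moreover have "cross (z - v a) (v b - v a) + cross (z - v b) (v a - v b) = 0"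
    by (simp add: cross_eq_Re_Im algebra_simps)
  ultimately show False by simp
qed

lemma region_side_signs:
  assumes "d < p" "region q d"
  shows "0 < side d q" "side (prv d) q < 0"
proof -
  have "0 < cross (v d - q) (v (nxt d) - v d)" "0 < cross (v d - q) (v (prv d) - v d)"
    using assms nxt_less nxt_neq prv_less prv_neq by (auto simp: region_def)
  moreover have "v (prv d) - v d = - edge (prv d)" using nxt_prv[OF assms(1)] by (simp add: edge_def)
  ultimately show "0 < side d q" "side (prv d) q < 0"
    using assms(1) by (simp_all add: side_def side_prv edge_def cross_eq_Re_Im algebra_simps)
qed

text \<open>The converse: \<open>X_c\<close> is the open wedge between the lines of the sides \<open>prv c\<close> and \<open>c\<close>.
  Multiply the Pluecker identity for \<open>cross (v c - q) (v j - v c)\<close> by the positive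
  \<open>cross (edge (prv c)) (edge c)\<close>; both terms on the other side are nonnegative by
  convexity, and one of them is positive.\<close>

lemma region_if_side_signs:
  assumes c: "c < p" and pos: "0 < side c q" and neg: "side (prv c) q < 0"
  shows "region q c"
  unfolding region_def
proof (intro allI impI)
  fix j assume j: "j < p" "j \<noteq> c"
  have nonneg: "0 \<le> side c (v j)" using side_vertex_pos[of c j] j c by (cases "j = nxt c") auto
  have nonneg_prv: "0 \<le> side (prv c) (v j)"
    using side_vertex_pos[of "prv c" j] j c prv_less nxt_prv by (cases "j = prv c") auto
  have one_pos: "0 < side c (v j) \<or> 0 < side (prv c) (v j)"
    using side_vertex_pos[of c j] side_vertex_pos[of "prv c" j] j c prv_less nxt_prv nxt_neq_prv
    by (cases "j = nxt c") auto
  have terms_pos: "0 < side c (v j) * (- side (prv c) q) + side (prv c) (v j) * side c q"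
  proof -
    have "0 \<le> side c (v j) * (- side (prv c) q)" "0 \<le> side (prv c) (v j) * side c q"
      using nonneg nonneg_prv pos neg by (simp_all add: mult_nonneg_nonpos)
    moreover have "0 < side c (v j) * (- side (prv c) q) \<or> 0 < side (prv c) (v j) * side c q"
      using one_pos pos neg mult_pos_neg[of "side c (v j)" "side (prv c) q"]
        mult_pos_pos[of "side (prv c) (v j)" "side c q"] by auto
    ultimately show ?thesis by linarith
  qed
  have plucker: "cross (edge (prv c)) (edge c) * cross (v c - q) (v j - v c)
      = side c (v j) * (- side (prv c) q) + side (prv c) (v j) * side c q"
  proof -
    have "cross (v c - q) (edge c) = side c q" "cross (v j - v c) (edge c) = - side c (v j)"
      by (simp_all add: side_def cross_eq_Re_Im algebra_simps)
    moreover have "cross (v c - q) (edge (prv c)) = side (prv c) q"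
      "cross (edge (prv c)) (v j - v c) = side (prv c) (v j)"
      by (simp_all add: side_prv[OF c] cross_eq_Re_Im algebra_simps)
    ultimately show ?thesis
      using cross_plucker[of "edge (prv c)" "edge c" "v c - q" "v j - v c"] by simp
  qed
  have "0 < cross (edge (prv c)) (edge c) * cross (v c - q) (v j - v c)"
    unfolding plucker by (rule terms_pos)
  then show "0 < cross (v c - q) (v j - v c)"
    using cross_edge_prv_edge_pos[OF c] by (simp add: zero_less_mult_iff)
qed

end

context outer_billiard
begin

lemma mem_ray_iff: "q \<in> ray c \<longleftrightarrow> (\<exists>s>0. q = ray_point c s)"
  by (auto simp: ray_def)

lemma ray_side_signs:
  assumes c: "c < p" and q: "q \<in> ray c"
  shows "side c q = 0" "side (prv c) q < 0" "0 < side (nxt c) q"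
proof -
  obtain s where s: "0 < s" "q = v c - of_real s * edge c"
    using q by (auto simp: mem_ray_iff ray_point_def)
  show "side c q = 0" using s by (simp add: side_def cross_minus_right cross_scale_right)
  have "side (prv c) q = - s * cross (edge (prv c)) (edge c)"
    using s by (simp add: side_prv[OF c] cross_minus_right cross_scale_right)
  then show "side (prv c) q < 0"
    using cross_edge_prv_edge_pos[OF c] s(1) by (simp add: mult_pos_pos)
  have "q - v (nxt c) = - (of_real (1 + s) * edge c)" using s by (simp add: edge_def algebra_simps)
  then have "side (nxt c) q = (1 + s) * cross (edge c) (edge (nxt c))"
    unfolding side_def
    by (simp only: cross_minus_right cross_scale_right cross_swap[of "edge (nxt c)" "edge c"])
  moreover have "0 < cross (edge c) (edge (nxt c))"
    using cross_edge_prv_edge_pos[OF nxt_less[of c]] prv_nxt[OF c] by simp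
  ultimately show "0 < side (nxt c) q" using s(1) by simp
qed

lemma region_or_ray_if_side_signs:
  assumes c: "c < p" and neg: "side (prv c) q < 0" and nonneg: "0 \<le> side c q"
  shows "region q c \<or> q \<in> ray c"
proof (cases "0 < side c q")
  case True
  then show ?thesis using region_if_side_signs c neg by blast
next
  case False
  then have "cross (edge c) (q - v c) = 0" using nonneg by (simp add: side_def)
  then obtain \<mu> where \<mu>: "q - v c = of_real \<mu> * edge c"
    using edge_nonzero[OF c] by (rule cross_eq_0_imp_real_multiple)
  have "side (prv c) q = \<mu> * cross (edge (prv c)) (edge c)"
    using \<mu> by (simp add: side_prv[OF c] cross_scale_right)
  then have "\<mu> < 0" using neg cross_edge_prv_edge_pos[OF c] by (simp add: mult_less_0_iff)
  then have "q = ray_point c (- \<mu>)" "0 < - \<mu>" using \<mu> by (auto simp: ray_point_def algebra_simps)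
  then show ?thesis unfolding mem_ray_iff by blast
qed

lemma ray_subset_wedge: "c < p \<Longrightarrow> ray c \<subseteq> wedge c"
  using ray_side_signs by (auto simp: wedge_def)

lemma wedge_cases:
  assumes c: "c < p" and q: "q \<in> wedge c"
  shows "region q c \<or> q \<in> ray c \<or> region q (nxt c)"
proof (cases "0 \<le> side c q")
  case True
  then show ?thesis using region_or_ray_if_side_signs c q by (auto simp: wedge_def)
next
  case False
  then have "region q (nxt c)"
    using region_if_side_signs[OF nxt_less[of c]] q prv_nxt[OF c] by (auto simp: wedge_def)
  then show ?thesis by blast
qed

lemma ray_not_in_region:
  assumes c: "c < p" and d: "d < p" and q: "q \<in> ray c"
  shows "\<not> region q d"
proof
  assume X: "region q d"
  show False
  proof (cases "d = c \<or> d = nxt c")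
    case True
    then show False
      using ray_side_signs[OF c q] region_side_signs[OF d X] prv_nxt[OF c] by auto
  next
    case False
    obtain s where s: "0 < s" "q = v c - of_real s * edge c"
      using q by (auto simp: mem_ray_iff ray_point_def)
    have "0 < cross (v d - q) (v c - v d)" using X False c by (auto simp: region_def)
    moreover have "v c - v d = of_real s * edge c - (v d - q)" using s by simp
    then have "cross (v d - q) (v c - v d) = s * cross (v d - q) (edge c)"
      by (simp only: cross_diff_right cross_scale_right cross_self)
    ultimately have "0 < cross (v d - q) (edge c)" using s(1) by (simp add: zero_less_mult_iff)
    moreover have "side c (v d) = cross (edge c) ((v d - q) - of_real s * edge c)"
      unfolding side_def s(2) by (simp add: algebra_simps)
    then have "side c (v d) = - cross (v d - q) (edge c)"
      by (simp add: cross_diff_right cross_scale_right cross_diff_left cross_swap[of "v d"] cross_swap[of q])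
    moreover have "0 < side c (v d)" using side_vertex_pos[of c d] c d False by auto
    ultimately show False by simp
  qed
qed

lemma rays_disjoint:
  assumes c: "c < p" and d: "d < p" and "c \<noteq> d" and q: "q \<in> ray c" "q \<in> ray d"
  shows False
proof (cases "d = nxt c \<or> d = prv c")
  case True
  then show False using ray_side_signs[OF c q(1)] ray_side_signs[OF d q(2)] by auto
next
  case False
  obtain s where s: "0 < s" "q = v c - of_real s * edge c"
    using q(1) by (auto simp: mem_ray_iff ray_point_def)
  obtain t where t: "0 < t" "q = v d - of_real t * edge d"
    using q(2) by (auto simp: mem_ray_iff ray_point_def)
  have "q - v c = (v d - v c) - of_real t * edge d" using t(2) by simp
  then have side_c: "side c q = side c (v d) - t * cross (edge c) (edge d)"
    unfolding side_def by (simp only: cross_diff_right cross_scale_right)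
  have "q - v d = (v c - v d) - of_real s * edge c" using s(2) by simp
  then have side_d: "side d q = side d (v c) - s * cross (edge d) (edge c)"
    unfolding side_def by (simp only: cross_diff_right cross_scale_right)
  have "0 < side c (v d)" using side_vertex_pos[of c d] c d False \<open>c \<noteq> d\<close> by auto
  moreover have "c \<noteq> nxt d" using False prv_nxt[OF d] by auto
  then have "0 < side d (v c)" using side_vertex_pos[of d c] c d \<open>c \<noteq> d\<close> by auto
  ultimately have "0 < t * cross (edge c) (edge d)" "0 < s * cross (edge d) (edge c)"
    using side_c side_d ray_side_signs(1)[OF c q(1)] ray_side_signs(1)[OF d q(2)] by simp_all
  then have "0 < cross (edge c) (edge d)" "0 < cross (edge d) (edge c)"
    using s(1) t(1) by (simp_all add: zero_less_mult_iff)
  then show False using cross_swap[of "edge c" "edge d"] by simp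
qed

text \<open>After a reflection in \<open>v b\<close> the point lies in some region or on some ray: walking around the
  polygon from \<open>b\<close>, the first side whose line has the point on its nonnegative side is found.\<close>

lemma reflected_region_covered:
  assumes b: "b < p" and z: "region (2 * v b - z) b"
  shows "\<exists>c<p. region z c \<or> z \<in> ray c"
proof -
  have "0 < cross (z - v b) (v (nxt b) - v b)" "0 < cross (z - v b) (v (prv b) - v b)"
    using z b nxt_less nxt_neq prv_less prv_neq by (auto simp: region_def algebra_simps)
  moreover have "v (prv b) - v b = - edge (prv b)" using nxt_prv[OF b] by (simp add: edge_def)
  ultimately have first: "side b z < 0" and last: "0 < side (prv b) z"
    using b by (simp_all add: side_def side_prv edge_def cross_eq_Re_Im algebra_simps)
  define f where "f k = side ((b + k) mod p) z" for k
  have "prv b = (b + (p - 1)) mod p" using p_ge_3 b by (simp add: prv_def)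
  then have "0 \<le> f (p - 1)" using last by (simp add: f_def)
  then obtain k where k: "k \<le> p - 1" "\<forall>i<k. f i < 0" "0 \<le> f k"
    using ex_least_nat_le[of "\<lambda>k. 0 \<le> f k"] by force
  have "k \<noteq> 0"
  proof
    assume "k = 0"
    then show False using k(3) first b by (simp add: f_def)
  qed
  define c where "c = (b + k) mod p"
  have "c < p" using p_ge_3 by (simp add: c_def)
  have "prv c = (b + (k - 1)) mod p"
  proof -
    have "prv c = (c + (p - 1)) mod p" using p_ge_3 by (simp add: prv_def)
    also have "\<dots> = (b + k + (p - 1)) mod p" by (simp add: c_def mod_add_left_eq)
    also have "b + k + (p - 1) = (b + (k - 1)) + p" using \<open>k \<noteq> 0\<close> p_ge_3 by simp
    finally show ?thesis by simp
  qed
  then have "side (prv c) z < 0" using k(2)[rule_format, of "k - 1"] \<open>k \<noteq> 0\<close> by (simp add: f_def)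
  moreover have "0 \<le> side c z" using k(3) by (simp add: f_def c_def)
  ultimately show ?thesis using region_or_ray_if_side_signs \<open>c < p\<close> by blast
qed

lemma open_region: "open {q. region q c}"
proof -
  have "{q. region q c} = (\<Inter>j\<in>{j. j < p \<and> j \<noteq> c}. {q. 0 < cross (v c - q) (v j - v c)})"
    by (auto simp: region_def)
  then show ?thesis by (simp only:) (intro open_INT ballI open_Collect_less continuous_intros; simp)
qed

lemma convex_region: "convex {q. region q c}"
proof -
  have "{q. region q c} = (\<Inter>j\<in>{j. j < p \<and> j \<noteq> c}. {q. 0 < cross (v c - q) (v j - v c)})"
    by (auto simp: region_def)
  then show ?thesis by (simp add: convex_INT convex_cross_halfplane)
qed

lemma open_wedge: "open (wedge c)"
  unfolding wedge_def side_def by (intro open_Collect_conj open_Collect_less continuous_intros)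

end

context outer_billiard
begin

text \<open>Position of the vertex \<open>c\<close> in the cyclic order that starts right after \<open>z\<close>, so that \<open>z\<close>
  itself comes last, at position \<open>p - 1\<close>; \<open>cidx z\<close> is the inverse.\<close>

definition cpos :: "nat \<Rightarrow> nat \<Rightarrow> nat" where "cpos z c = (c + (p - Suc z)) mod p"

definition cidx :: "nat \<Rightarrow> nat \<Rightarrow> nat" where "cidx z m = (m + Suc z) mod p"

lemma cpos_less: "cpos z c < p" and cidx_less: "cidx z m < p"
  using p_ge_3 by (simp_all add: cpos_def cidx_def)

lemma cidx_cpos: "z < p \<Longrightarrow> c < p \<Longrightarrow> cidx z (cpos z c) = c"
proof -
  assume "z < p" "c < p"
  have "cidx z (cpos z c) = ((c + (p - Suc z)) mod p + Suc z) mod p" by (simp only: cidx_def cpos_def)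
  also have "\<dots> = (c + (p - Suc z) + Suc z) mod p" by (rule mod_add_left_eq)
  also have "c + (p - Suc z) + Suc z = c + p" using \<open>z < p\<close> by simp
  finally show ?thesis using \<open>c < p\<close> by simp
qed

lemma cpos_cidx: "z < p \<Longrightarrow> m < p \<Longrightarrow> cpos z (cidx z m) = m"
proof -
  assume "z < p" "m < p"
  have "cpos z (cidx z m) = (m + Suc z + (p - Suc z)) mod p"
    by (simp add: cidx_def cpos_def mod_add_left_eq)
  also have "m + Suc z + (p - Suc z) = m + p" using \<open>z < p\<close> by simp
  finally show ?thesis using \<open>m < p\<close> by simp
qed

lemma cpos_self: "z < p \<Longrightarrow> cpos z z = p - 1"
  by (simp add: cpos_def)

lemma cpos_inj: "z < p \<Longrightarrow> c < p \<Longrightarrow> d < p \<Longrightarrow> cpos z c = cpos z d \<Longrightarrow> c = d"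
  using cidx_cpos by metis

lemma cpos_nxt: "c < p \<Longrightarrow> cpos z c < p - 1 \<Longrightarrow> cpos z (nxt c) = Suc (cpos z c)"
proof -
  assume "cpos z c < p - 1"
  have "cpos z (nxt c) = (Suc c + (p - Suc z)) mod p" by (simp add: cpos_def nxt_def mod_add_left_eq)
  also have "\<dots> = Suc (cpos z c) mod p" by (simp add: cpos_def mod_Suc_eq)
  finally show ?thesis using \<open>cpos z c < p - 1\<close> by simp
qed

text \<open>Removing \<open>ray z\<close> and \<open>ray (cidx z m)\<close>, the plane splits into the disjoint open sets of points
  in regions or on rays at positions up to \<open>m\<close> and beyond \<open>m\<close>; the wedges make them open
  around the rays.\<close>

definition lower_part :: "nat \<Rightarrow> nat \<Rightarrow> complex set" where
  "lower_part z m = (\<Union>c\<in>{c. c < p \<and> cpos z c \<le> m}. {q. region q c})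
     \<union> (\<Union>c\<in>{c. c < p \<and> cpos z c < m}. wedge c)"

definition upper_part :: "nat \<Rightarrow> nat \<Rightarrow> complex set" where
  "upper_part z m = (\<Union>c\<in>{c. c < p \<and> m < cpos z c}. {q. region q c})
     \<union> (\<Union>c\<in>{c. c < p \<and> m < cpos z c \<and> cpos z c < p - 1}. wedge c)"

lemma open_lower_part: "open (lower_part z m)"
  and open_upper_part: "open (upper_part z m)"
  unfolding lower_part_def upper_part_def using open_region open_wedge
  by (auto intro!: open_Un open_UN)

lemma wedge_cases_cpos:
  assumes "c < p" "q \<in> wedge c" "cpos z c < p - 1"
  shows "region q c \<or> q \<in> ray c \<or> (region q (nxt c) \<and> cpos z (nxt c) = Suc (cpos z c))"
  using wedge_cases[OF assms(1,2)] cpos_nxt[OF assms(1,3)] by blast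

lemma lower_part_cases:
  assumes "m < p" "q \<in> lower_part z m"
  shows "\<exists>c<p. cpos z c \<le> m \<and> (region q c \<or> q \<in> ray c \<and> cpos z c < m)"
proof -
  consider c where "c < p" "cpos z c \<le> m" "region q c"
    | c where "c < p" "cpos z c < m" "q \<in> wedge c"
    using assms(2) unfolding lower_part_def by blast
  then show ?thesis
  proof cases
    case (2 c)
    then have "cpos z c < p - 1" using assms(1) by linarith
    then consider (same) "region q c \<or> q \<in> ray c"
      | (succ) "region q (nxt c)" "cpos z (nxt c) = Suc (cpos z c)"
      using wedge_cases_cpos[OF 2(1,3)] by blast
    then show ?thesis
    proof cases
      case same
      then show ?thesis using 2 by auto
    next
      case succ
      then show ?thesis using 2 nxt_less[of c] by (intro exI[of _ "nxt c"]) auto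
    qed
  qed blast
qed

lemma upper_part_cases:
  assumes "q \<in> upper_part z m"
  shows "\<exists>c<p. m < cpos z c \<and> (region q c \<or> q \<in> ray c)"
proof -
  consider c where "c < p" "m < cpos z c" "region q c"
    | c where "c < p" "m < cpos z c" "cpos z c < p - 1" "q \<in> wedge c"
    using assms unfolding upper_part_def by blast
  then show ?thesis
  proof cases
    case (2 c)
    consider (same) "region q c \<or> q \<in> ray c"
      | (succ) "region q (nxt c)" "cpos z (nxt c) = Suc (cpos z c)"
      using wedge_cases_cpos[OF 2(1,4,3)] by blast
    then show ?thesis
    proof cases
      case same
      then show ?thesis using 2 by auto
    next
      case succ
      then show ?thesis using 2 nxt_less[of c] by (intro exI[of _ "nxt c"]) auto
    qed
  qed blast
qed

lemma lower_upper_part_disjoint: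
  assumes "m < p"
  shows "lower_part z m \<inter> upper_part z m = {}"
proof (rule ccontr)
  assume "lower_part z m \<inter> upper_part z m \<noteq> {}"
  then obtain q where "q \<in> lower_part z m" "q \<in> upper_part z m" by blast
  then obtain c d where c: "c < p" "cpos z c \<le> m" "region q c \<or> q \<in> ray c"
    and d: "d < p" "m < cpos z d" "region q d \<or> q \<in> ray d"
    using lower_part_cases[OF assms] upper_part_cases by blast
  then have "c \<noteq> d" by auto
  show False
  proof (cases "region q c")
    case True
    then show False using d \<open>c \<noteq> d\<close> region_unique[OF c(1) d(1)] ray_not_in_region[OF d(1) c(1)] by blast
  next
    case False
    then show False using c d \<open>c \<noteq> d\<close> ray_not_in_region[OF c(1) d(1)] rays_disjoint[OF c(1) d(1)] by blast
  qed
qed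

lemma in_lower_or_upper_part:
  assumes z: "z < p" and m: "m < p" and c: "c < p" "region q c \<or> q \<in> ray c"
    and "q \<notin> ray z" "q \<notin> ray (cidx z m)"
  shows "q \<in> lower_part z m \<union> upper_part z m"
proof (cases "region q c")
  case True
  then show ?thesis using c(1) unfolding lower_part_def upper_part_def by (cases "cpos z c \<le> m") auto
next
  case False
  then have ray: "q \<in> ray c" using c by blast
  have "cpos z c \<noteq> p - 1" using cpos_inj[OF z c(1) z] cpos_self[OF z] ray assms(5) by auto
  moreover have "cpos z c \<noteq> m" using cidx_cpos[OF z c(1)] ray assms(6) by auto
  moreover have "q \<in> wedge c" using ray_subset_wedge[OF c(1)] ray by blast
  ultimately show ?thesis
    using c(1) cpos_less[of z c] unfolding lower_part_def upper_part_def
    by (cases "cpos z c < m") auto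
qed

lemma connected_meets_rays_between:
  assumes E: "connected E" and cov: "\<And>q. q \<in> E \<Longrightarrow> \<exists>c<p. region q c \<or> q \<in> ray c"
    and z: "z < p" "E \<inter> ray z = {}"
    and a: "a < p" "q0 \<in> E" "region q0 a" and b: "b < p" "q1 \<in> E" "region q1 b"
  shows "cidx z ` {cpos z a..<cpos z b} \<subseteq> {c. c < p \<and> (\<exists>q\<in>E. q \<in> ray c)}"
proof
  fix c assume "c \<in> cidx z ` {cpos z a..<cpos z b}"
  then obtain m where m: "cpos z a \<le> m" "m < cpos z b" "c = cidx z m" by auto
  have "m < p" using m cpos_less[of z b] by linarith
  have "E \<inter> ray c \<noteq> {}"
  proof
    assume "E \<inter> ray c = {}"
    then have "E \<subseteq> lower_part z m \<union> upper_part z m"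
      using in_lower_or_upper_part[OF z(1) \<open>m < p\<close>] cov z(2) m(3) by blast
    then have "lower_part z m \<inter> E = {} \<or> upper_part z m \<inter> E = {}"
      using connectedD[OF E open_lower_part open_upper_part] lower_upper_part_disjoint[OF \<open>m < p\<close>]
      by blast
    moreover have "q0 \<in> lower_part z m" using a m unfolding lower_part_def by auto
    moreover have "q1 \<in> upper_part z m" using b m unfolding upper_part_def by auto
    ultimately show False using a(2) b(2) by blast
  qed
  then show "c \<in> {c. c < p \<and> (\<exists>q\<in>E. q \<in> ray c)}" using m(3) cidx_less by auto
qed

text \<open>Between two regions met, in the cyclic order starting after a ray that is avoided, every ray
  is met.\<close>

lemma card_regions_met_le:
  assumes E: "connected E" and cov: "\<And>q. q \<in> E \<Longrightarrow> \<exists>c<p. region q c \<or> q \<in> ray c"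
  shows "card {a. a < p \<and> (\<exists>q\<in>E. region q a)} \<le> Suc (card {c. c < p \<and> (\<exists>q\<in>E. q \<in> ray c)})"
    (is "card ?A \<le> Suc (card ?R)")
proof (cases "?R = {..<p} \<or> ?A = {}")
  case True
  then show ?thesis
  proof
    assume "?R = {..<p}"
    moreover have "card ?A \<le> card {..<p}" by (rule card_mono) auto
    ultimately show ?thesis by simp
  next
    assume "?A = {}"
    then show ?thesis by (simp only: card.empty)
  qed
next
  case False
  then obtain z where z: "z < p" "E \<inter> ray z = {}" and "?A \<noteq> {}" by auto
  define m0 where "m0 = Min (cpos z ` ?A)"
  define m1 where "m1 = Max (cpos z ` ?A)"
  have fin: "finite (cpos z ` ?A)" "cpos z ` ?A \<noteq> {}" using \<open>?A \<noteq> {}\<close> by auto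
  have "m0 \<in> cpos z ` ?A" unfolding m0_def by (rule Min_in[OF fin])
  then obtain a where a: "m0 = cpos z a" "a \<in> ?A" by (rule imageE)
  have "m1 \<in> cpos z ` ?A" unfolding m1_def by (rule Max_in[OF fin])
  then obtain b where b: "m1 = cpos z b" "b \<in> ?A" by (rule imageE)
  have "?A \<subseteq> cidx z ` {m0..m1}"
  proof
    fix c assume c: "c \<in> ?A"
    then have "m0 \<le> cpos z c" "cpos z c \<le> m1" using fin by (auto simp: m0_def m1_def)
    then show "c \<in> cidx z ` {m0..m1}" using cidx_cpos[OF z(1)] c by force
  qed
  then have "card ?A \<le> card (cidx z ` {m0..m1})" by (intro card_mono) auto
  also have "\<dots> \<le> Suc m1 - m0" using card_image_le[of "{m0..m1}" "cidx z"] by simp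
  finally have "card ?A \<le> Suc m1 - m0" .
  moreover have "cidx z ` {m0..<m1} \<subseteq> ?R"
    using connected_meets_rays_between[OF E cov z] a b by blast
  then have "card (cidx z ` {m0..<m1}) \<le> card ?R" by (intro card_mono) auto
  moreover have "inj_on (cidx z) {m0..<m1}"
    using cpos_cidx[OF z(1)] b cpos_less[of z b] by (intro inj_on_inverseI[of _ "cpos z"]) auto
  ultimately show ?thesis by (simp add: card_image)
qed

end

lemma orbit_append: "k \<le> length u \<Longrightarrow> orbit v (nth (u @ u')) x k = orbit v (nth u) x k"
  by (rule orbit_cong) (simp add: nth_append)

context outer_billiard
begin

subsection \<open>Cells of codes\<close>

definition cell :: "nat list \<Rightarrow> complex set" where
  "cell w = {x. \<forall>k<length w. in_region p v (orbit v (nth w) x k) (w ! k)}"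

definition codes :: "nat \<Rightarrow> nat list set" where
  "codes n = {w. length w = n \<and> cell w \<noteq> {}}"

definition image_cell :: "nat list \<Rightarrow> complex set" where
  "image_cell w = (\<lambda>x. orbit v (nth w) x (length w)) ` cell w"

definition next_letters :: "nat list \<Rightarrow> nat set" where
  "next_letters w = {a. a < p \<and> (\<exists>q\<in>image_cell w. region q a)}"

definition rays_met :: "nat list \<Rightarrow> nat set" where
  "rays_met w = {c. c < p \<and> (\<exists>q\<in>image_cell w. q \<in> ray c)}"

lemma codes_letters: "w \<in> codes n \<Longrightarrow> set w \<subseteq> {..<p}"
  by (force simp: codes_def cell_def in_region_def in_set_conv_nth)

lemma finite_codes: "finite (codes n)"
proof -
  have "codes n \<subseteq> {w. set w \<subseteq> {..<p} \<and> length w = n}"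
    using codes_letters by (auto simp: codes_def)
  then show ?thesis using finite_lists_length_eq[of "{..<p}" n] finite_subset by blast
qed

lemma complexity_le_card_codes: "complexity p v n \<le> card (codes n)"
proof -
  have "{map c [0..<n] | x c. regular_code p v x c} \<subseteq> codes n"
  proof
    fix w assume "w \<in> {map c [0..<n] | x c. regular_code p v x c}"
    then obtain x c where w: "w = map c [0..<n]" and r: "regular_code p v x c" by blast
    have "orbit v (nth w) x k = orbit v c x k" if "k < n" for k
      by (rule orbit_cong) (use that w in auto)
    then have "x \<in> cell w" using r w by (auto simp: cell_def regular_code_def)
    then show "w \<in> codes n" using w by (auto simp: codes_def)
  qed
  then show ?thesis unfolding complexity_def by (rule card_mono[OF finite_codes])
qed

lemma cell_snoc:
  "x \<in> cell (w @ [a]) \<longleftrightarrow> x \<in> cell w \<and> in_region p v (orbit v (nth w) x (length w)) a"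
  by (auto simp: cell_def orbit_append nth_append less_Suc_eq)

lemma orbit_snoc:
  "orbit v (nth (w @ [a])) x (Suc (length w)) = 2 * v a - orbit v (nth w) x (length w)"
  by (simp add: orbit_append)

lemma card_codes_Suc_le: "card (codes (Suc n)) \<le> (\<Sum>w\<in>codes n. card (next_letters w))"
proof -
  have "codes (Suc n) \<subseteq> (\<lambda>(w, a). w @ [a]) ` (SIGMA w:codes n. next_letters w)"
  proof
    fix w' assume w': "w' \<in> codes (Suc n)"
    then obtain w a where "w' = w @ [a]" by (cases w' rule: rev_cases) (auto simp: codes_def)
    with w' obtain x where w': "w' = w @ [a]" "length w = n" "x \<in> cell (w @ [a])"
      by (auto simp: codes_def)
    then have "w \<in> codes n" "a \<in> next_letters w"
      by (auto simp: codes_def next_letters_def image_cell_def cell_snoc in_region_iff)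
    then show "w' \<in> (\<lambda>(w, a). w @ [a]) ` (SIGMA w:codes n. next_letters w)" using w'(1) by force
  qed
  moreover have "finite (SIGMA w:codes n. next_letters w)"
    using finite_codes by (auto simp: next_letters_def)
  ultimately have "card (codes (Suc n)) \<le> card ((\<lambda>(w, a). w @ [a]) ` (SIGMA w:codes n. next_letters w))"
    by (intro card_mono finite_imageI)
  also have "\<dots> \<le> card (SIGMA w:codes n. next_letters w)"
    using \<open>finite (SIGMA w:codes n. next_letters w)\<close> by (rule card_image_le)
  also have "\<dots> = (\<Sum>w\<in>codes n. card (next_letters w))"
    using finite_codes by (intro card_SigmaI) (auto simp: next_letters_def)
  finally show ?thesis .
qed

lemma convex_cell: "convex (cell w)"
proof (rule convexI)
  fix x y :: complex and s t :: real
  assume xy: "x \<in> cell w" "y \<in> cell w" and st: "0 \<le> s" "0 \<le> t" "s + t = 1"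
  have "region (s *\<^sub>R a + t *\<^sub>R b) c" if "region a c" "region b c" for a b c
    using convexD[OF convex_region] that st by blast
  then show "s *\<^sub>R x + t *\<^sub>R y \<in> cell w"
    using xy by (auto simp: cell_def in_region_iff orbit_affine[OF st(3)])
qed

lemma connected_image_cell: "connected (image_cell w)"
  unfolding image_cell_def
  by (intro connected_continuous_image continuous_intros convex_connected convex_cell)

lemma image_cell_covered:
  assumes "w \<noteq> []" "q \<in> image_cell w"
  shows "\<exists>c<p. region q c \<or> q \<in> ray c"
proof -
  obtain u a where w: "w = u @ [a]" using assms(1) by (cases w rule: rev_cases) auto
  then obtain x where "x \<in> cell (u @ [a])" "q = 2 * v a - orbit v (nth u) x (length u)"
    using assms(2) by (auto simp: image_cell_def orbit_snoc orbit_append)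
  then have "a < p" "region (2 * v a - q) a" by (auto simp: cell_snoc in_region_iff)
  then show ?thesis by (rule reflected_region_covered)
qed

lemma card_next_letters_le:
  assumes "w \<in> codes n"
  shows "card (next_letters w) \<le> Suc (card (rays_met w))"
proof (cases "w = []")
  case True
  have "rays_met w = {..<p}"
  proof (intro set_eqI iffI)
    fix c assume "c \<in> {..<p}"
    moreover have "ray_point c 1 \<in> ray c" by (force simp: ray_def)
    moreover have "ray_point c 1 \<in> image_cell w" using True by (simp add: image_cell_def cell_def)
    ultimately show "c \<in> rays_met w" by (auto simp: rays_met_def)
  qed (auto simp: rays_met_def)
  moreover have "card (next_letters w) \<le> card {..<p}" by (intro card_mono) (auto simp: next_letters_def)
  ultimately show ?thesis by simp
next
  case False
  then show ?thesis unfolding next_letters_def rays_met_def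
    by (intro card_regions_met_le connected_image_cell image_cell_covered)
qed

text \<open>The billiard map is injective, so distinct codes of the same length have disjoint image cells.\<close>

lemma image_cell_disjoint:
  assumes "length w = length w'" "q \<in> image_cell w" "q \<in> image_cell w'"
  shows "w = w'"
  using assms
proof (induction w arbitrary: w' q rule: rev_induct)
  case Nil
  then show ?case by simp
next
  case (snoc a u)
  obtain u' a' where w': "w' = u' @ [a']" "length u' = length u"
    using snoc.prems(1) by (cases w' rule: rev_cases) auto
  obtain x where x: "x \<in> cell (u @ [a])" "q = 2 * v a - orbit v (nth u) x (length u)"
    using snoc.prems(2) by (auto simp: image_cell_def orbit_snoc orbit_append)
  obtain x' where x': "x' \<in> cell (u' @ [a'])" "q = 2 * v a' - orbit v (nth u') x' (length u')"
    using snoc.prems(3) unfolding w'(1) by (auto simp: image_cell_def orbit_snoc orbit_append)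
  have "a < p" "region (2 * v a - q) a" using x by (auto simp: cell_snoc in_region_iff)
  moreover have "a' < p" "region (2 * v a' - q) a'" using x' by (auto simp: cell_snoc in_region_iff)
  ultimately have "a = a'" using reflected_region_unique by blast
  then have "orbit v (nth u) x (length u) = orbit v (nth u') x' (length u')" using x(2) x'(2) by simp
  moreover have "orbit v (nth u) x (length u) \<in> image_cell u"
    "orbit v (nth u') x' (length u') \<in> image_cell u'"
    using x(1) x'(1) by (auto simp: image_cell_def cell_snoc)
  ultimately have "u = u'" using snoc.IH[of u'] w'(2) by simp
  then show ?case using w'(1) \<open>a = a'\<close> by simp
qed

end

lemma orbit_0_in_bounded_int_combinations:
  assumes "set w \<subseteq> {..<p}"
  shows "k \<le> length w \<Longrightarrow> orbit v (nth w) 0 k \<in> bounded_int_combinations p (\<lambda>i. 2 * v i) k"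
proof (induction k)
  case 0
  show ?case unfolding bounded_int_combinations_def by (intro CollectI exI[of _ "\<lambda>_. 0"]) simp
next
  case (Suc k)
  then obtain \<kappa> where \<kappa>: "\<forall>i. \<bar>\<kappa> i\<bar> \<le> int k" "orbit v (nth w) 0 k = (\<Sum>i<p. of_int (\<kappa> i) * (2 * v i))"
    by (auto simp: bounded_int_combinations_def)
  have "w ! k \<in> set w" using Suc.prems by (intro nth_mem) simp
  then have a: "w ! k < p" using assms by blast
  define \<kappa>' where "\<kappa>' i = (if i = w ! k then 1 else 0) - \<kappa> i" for i
  have "orbit v (nth w) 0 (Suc k) = (\<Sum>i<p. (if i = w ! k then 2 * v i else 0)) - orbit v (nth w) 0 k"
    using a by simp
  also have "\<dots> = (\<Sum>i<p. of_int (\<kappa>' i) * (2 * v i))"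
    unfolding \<kappa>(2) sum_subtractf[symmetric] by (intro sum.cong) (auto simp: \<kappa>'_def algebra_simps)
  finally have eq: "orbit v (nth w) 0 (Suc k) = (\<Sum>i<p. of_int (\<kappa>' i) * (2 * v i))" .
  have "\<bar>\<kappa>' i\<bar> \<le> int (Suc k)" for i
    using \<kappa>(1)[rule_format, of i] by (auto simp: \<kappa>'_def)
  then show ?case unfolding bounded_int_combinations_def using eq by (intro CollectI exI[of _ \<kappa>']) auto
qed

lemma orbit_0_diff_in_bounded_int_combinations:
  assumes w: "set w \<subseteq> {..<p}" and "k \<le> length w" "\<epsilon> \<in> {1, -1}"
  shows "orbit v (nth w) 0 k - \<epsilon> * orbit v (nth w) 0 (length w)
    \<in> bounded_int_combinations p (\<lambda>i. 2 * v i) (2 * length w)"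
proof -
  have "orbit v (nth w) 0 k \<in> bounded_int_combinations p (\<lambda>i. 2 * v i) (length w)"
    using orbit_0_in_bounded_int_combinations[OF w assms(2)] bounded_int_combinations_mono assms(2) by blast
  moreover have "- (\<epsilon> * orbit v (nth w) 0 (length w)) \<in> bounded_int_combinations p (\<lambda>i. 2 * v i) (length w)"
    using orbit_0_in_bounded_int_combinations[OF w, of "length w"] assms(3)
    by (auto intro: bounded_int_combinations_uminus)
  ultimately show ?thesis
    unfolding mult_2 using bounded_int_combinations_add by fastforce
qed

context outer_billiard
begin

subsection \<open>Counting codes whose image cell meets a ray\<close>

text \<open>On the cell of \<open>w\<close>, \<open>T^n\<close> is \<open>x \<mapsto> (-1)^n x + \<tau>\<^sub>n\<close> with \<open>\<tau> = orbit v (nth w) 0\<close>.\<close>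

lemma image_cell_iff:
  assumes "set w \<subseteq> {..<p}"
  defines "x q \<equiv> (-1) ^ length w * (q - orbit v (nth w) 0 (length w))"
  shows "q \<in> image_cell w \<longleftrightarrow> (\<forall>k<length w. region (orbit v (nth w) (x q) k) (w ! k))"
proof -
  have sq: "(-1 :: complex) ^ n * (-1) ^ n = 1" for n by (induction n) auto
  have "q \<in> image_cell w \<longleftrightarrow> x q \<in> cell w"
  proof
    assume "q \<in> image_cell w"
    then obtain y where "y \<in> cell w" "q = orbit v (nth w) y (length w)" by (auto simp: image_cell_def)
    moreover have "orbit v (nth w) y (length w) = (-1) ^ length w * y + orbit v (nth w) 0 (length w)"
      by (rule orbit_eq)
    ultimately show "x q \<in> cell w" by (simp add: x_def mult.assoc[symmetric] sq)
  next
    assume "x q \<in> cell w"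
    moreover have "q = orbit v (nth w) (x q) (length w)"
      by (subst orbit_eq) (simp add: x_def mult.assoc[symmetric] sq)
    ultimately show "q \<in> image_cell w" by (auto simp: image_cell_def)
  qed
  moreover have "w ! k < p" if "k < length w" for k using assms(1) nth_mem[OF that] by blast
  ultimately show ?thesis by (auto simp: cell_def in_region_iff)
qed

definition ray_params :: "nat \<Rightarrow> nat list \<Rightarrow> real set" where
  "ray_params c w = {s. 0 < s \<and> ray_point c s \<in> image_cell w}"

text \<open>The possible endpoints of the parameter interval \<open>ray_params c w\<close>: the roots of the linear
  constraints \<open>region (\<epsilon>\<^sub>k q + t\<^sub>k) (w ! k)\<close> along the ray.\<close>

definition root_candidates :: "nat \<Rightarrow> nat \<Rightarrow> real set" where
  "root_candidates n c =
     (\<lambda>(a, j, \<epsilon>, t). - cross (v a - \<epsilon> * v c - t) (v j - v a) / cross (\<epsilon> * edge c) (v j - v a))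
       ` ({..<p} \<times> {..<p} \<times> {1, -1} \<times> bounded_int_combinations p (\<lambda>i. 2 * v i) (2 * n))"

lemma card_root_candidates_le:
  "card (root_candidates n c) \<le> 2 * p ^ 2 * card (bounded_int_combinations p (\<lambda>i. 2 * v i) (2 * n))"
proof -
  have "card (root_candidates n c)
      \<le> card ({..<p} \<times> {..<p} \<times> {1, -1 :: complex} \<times> bounded_int_combinations p (\<lambda>i. 2 * v i) (2 * n))"
    unfolding root_candidates_def by (rule card_image_le) (simp add: finite_bounded_int_combinations)
  then show ?thesis by (simp add: card_cartesian_product power2_eq_square algebra_simps)
qed

lemma root_candidatesI:
  "a < p \<Longrightarrow> j < p \<Longrightarrow> \<epsilon> \<in> {1, -1} \<Longrightarrow> t \<in> bounded_int_combinations p (\<lambda>i. 2 * v i) (2 * n) \<Longrightarrow>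
    - cross (v a - \<epsilon> * v c - t) (v j - v a) / cross (\<epsilon> * edge c) (v j - v a) \<in> root_candidates n c"
  unfolding root_candidates_def by (intro image_eqI[where x = "(a, j, \<epsilon>, t)"]) auto

text \<open>Along the ray the constraints defining the image cell are linear in the parameter \<open>s\<close>: the
  \<open>k\<close>-th iterate of the preimage of \<open>q\<close> is \<open>\<epsilon>\<^sub>k q + t\<^sub>k\<close>.\<close>

lemma ray_params_eq_positive_solutions:
  assumes w: "w \<in> codes n"
  obtains I :: "(nat \<times> nat) set" and \<alpha> \<beta> where "finite I" "ray_params c w = positive_solutions I \<alpha> \<beta>"
    "\<And>i. i \<in> I \<Longrightarrow> - \<alpha> i / \<beta> i \<in> root_candidates n c"
proof -
  define \<tau> where "\<tau> = orbit v (nth w) 0"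
  define \<epsilon> where "\<epsilon> k = (-1 :: complex) ^ k * (-1) ^ n" for k
  define t where "t k = \<tau> k - \<epsilon> k * \<tau> n" for k
  define I where "I = {(k, j). k < n \<and> j < p \<and> j \<noteq> w ! k}"
  define \<alpha> where "\<alpha> = (\<lambda>(k, j). cross (v (w ! k) - \<epsilon> k * v c - t k) (v j - v (w ! k)))"
  define \<beta> where "\<beta> = (\<lambda>(k, j). cross (\<epsilon> k * edge c) (v j - v (w ! k)))"
  have n: "length w = n" and letters: "set w \<subseteq> {..<p}" using w codes_letters by (auto simp: codes_def)
  have "finite I" by (rule finite_subset[of _ "{..<n} \<times> {..<p}"]) (auto simp: I_def)
  moreover have "ray_params c w = positive_solutions I \<alpha> \<beta>"
  proof -
    have orbit: "orbit v (nth w) ((-1) ^ n * (q - orbit v (nth w) 0 n)) k = \<epsilon> k * q + t k"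
      for q k by (subst orbit_eq) (simp add: \<tau>_def \<epsilon>_def t_def algebra_simps)
    have "ray_point c s \<in> image_cell w \<longleftrightarrow>
        (\<forall>k<n. \<forall>j<p. j \<noteq> w ! k \<longrightarrow> 0 < cross (v (w ! k) - (\<epsilon> k * ray_point c s + t k)) (v j - v (w ! k)))"
      for s unfolding image_cell_iff[OF letters] orbit region_def n ..
    also have "\<dots> s \<longleftrightarrow> (\<forall>i\<in>I. 0 < \<alpha> i + \<beta> i * s)" for s
      unfolding ray_point_def cross_along_line by (auto simp: I_def \<alpha>_def \<beta>_def mult.commute)
    finally show ?thesis unfolding ray_params_def positive_solutions_def by blast
  qed
  moreover have "- \<alpha> i / \<beta> i \<in> root_candidates n c" if "i \<in> I" for i
  proof -
    obtain k j where kj: "i = (k, j)" "k < n" "j < p" using \<open>i \<in> I\<close> by (auto simp: I_def)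
    have "\<epsilon> k \<in> {1, -1}" unfolding \<epsilon>_def by (cases "even (k + n)") (auto simp flip: power_add)
    then have "t k \<in> bounded_int_combinations p (\<lambda>i. 2 * v i) (2 * n)"
      using orbit_0_diff_in_bounded_int_combinations[OF letters] kj n by (simp add: t_def \<tau>_def)
    moreover have "w ! k < p" using letters nth_mem[of k w] kj n by blast
    ultimately have "- cross (v (w ! k) - \<epsilon> k * v c - t k) (v j - v (w ! k))
        / cross (\<epsilon> k * edge c) (v j - v (w ! k)) \<in> root_candidates n c"
      using kj(3) \<open>\<epsilon> k \<in> {1, -1}\<close> by (intro root_candidatesI)
    then show ?thesis by (simp add: kj(1) \<alpha>_def \<beta>_def)
  qed
  ultimately show ?thesis by (rule that)
qed

lemma Inf_ray_params:
  assumes "w \<in> codes n" "c \<in> rays_met w"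
  shows "Inf (ray_params c w) \<in> insert 0 (root_candidates n c)"
    and "\<exists>s>Inf (ray_params c w). {Inf (ray_params c w)<..s} \<subseteq> ray_params c w"
proof -
  obtain s0 where s0: "s0 \<in> ray_params c w"
    using assms(2) by (auto simp: rays_met_def ray_params_def mem_ray_iff)
  obtain I :: "(nat \<times> nat) set" and \<alpha> \<beta> where I: "finite I" "ray_params c w = positive_solutions I \<alpha> \<beta>"
    "\<And>i. i \<in> I \<Longrightarrow> - \<alpha> i / \<beta> i \<in> root_candidates n c"
    using ray_params_eq_positive_solutions[OF assms(1)] by blast
  have s0': "s0 \<in> positive_solutions I \<alpha> \<beta>" using s0 I(2) by simp
  show "Inf (ray_params c w) \<in> insert 0 (root_candidates n c)"
    using Inf_positive_solutions_root[OF I(1) s0'] I(3) by (auto simp: I(2))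
  have "Inf (ray_params c w) \<le> s0" "Inf (ray_params c w) \<noteq> s0"
    using cInf_lower[OF s0' bdd_below_positive_solutions] Inf_positive_solutions_notin[OF I(1)] s0'
    by (auto simp: I(2))
  moreover have "{Inf (ray_params c w)<..s0} \<subseteq> ray_params c w"
    using positive_solutions_interval[OF s0'] by (auto simp: I(2))
  ultimately show "\<exists>s>Inf (ray_params c w). {Inf (ray_params c w)<..s} \<subseteq> ray_params c w"
    by (intro exI[of _ s0]) auto
qed

text \<open>Each code meeting the ray is determined by the infimum of its parameters along the ray:
  the parameter intervals of distinct codes are disjoint.\<close>

lemma card_codes_meeting_ray_le:
  "card {w \<in> codes n. c \<in> rays_met w} \<le> Suc (card (root_candidates n c))"
proof -
  define W where "W = {w \<in> codes n. c \<in> rays_met w}"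
  define \<sigma> where "\<sigma> w = Inf (ray_params c w)" for w
  have "inj_on \<sigma> W"
  proof (rule inj_onI)
    fix w1 w2 assume w: "w1 \<in> W" "w2 \<in> W" "\<sigma> w1 = \<sigma> w2"
    obtain s1 s2 where "\<sigma> w1 < s1" "{\<sigma> w1<..s1} \<subseteq> ray_params c w1"
      "\<sigma> w2 < s2" "{\<sigma> w2<..s2} \<subseteq> ray_params c w2"
      using Inf_ray_params(2) w(1,2) unfolding W_def \<sigma>_def by blast
    then have "min s1 s2 \<in> ray_params c w1 \<inter> ray_params c w2" using w(3) by auto
    then have "ray_point c (min s1 s2) \<in> image_cell w1 \<inter> image_cell w2" by (simp add: ray_params_def)
    moreover have "length w1 = length w2" using w by (simp add: W_def codes_def)
    ultimately show "w1 = w2" using image_cell_disjoint by blast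
  qed
  moreover have "\<sigma> ` W \<subseteq> insert 0 (root_candidates n c)"
    using Inf_ray_params(1) by (auto simp: W_def \<sigma>_def)
  moreover have "finite (root_candidates n c)"
    by (simp add: root_candidates_def finite_bounded_int_combinations)
  ultimately have "card W \<le> card (insert 0 (root_candidates n c))"
    by (simp add: card_image[symmetric] card_mono)
  also have "\<dots> \<le> Suc (card (root_candidates n c))" by (rule card_insert_le_m1) auto
  finally show ?thesis by (simp add: W_def)
qed

end

lemma sum_card_eq_sum_card_fibres:
  assumes "finite A" "finite C" "\<And>a. a \<in> A \<Longrightarrow> R a \<subseteq> C"
  shows "(\<Sum>a\<in>A. card (R a)) = (\<Sum>c\<in>C. card {a \<in> A. c \<in> R a})"
proof -
  have "(\<Sum>a\<in>A. card (R a)) = (\<Sum>a\<in>A. \<Sum>c\<in>C. if c \<in> R a then 1 else 0)"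
  proof (rule sum.cong[OF refl])
    fix a assume "a \<in> A"
    then have "{c \<in> C. c \<in> R a} = R a" using assms(3) by blast
    then have "card (R a) = card {c \<in> C. c \<in> R a}" by simp
    also have "\<dots> = (\<Sum>c\<in>{c \<in> C. c \<in> R a}. 1)" by simp
    also have "\<dots> = (\<Sum>c\<in>C. if c \<in> R a then 1 else 0)" using assms(2) by (rule sum.inter_filter)
    finally show "card (R a) = (\<Sum>c\<in>C. if c \<in> R a then 1 else 0)" .
  qed
  also have "\<dots> = (\<Sum>c\<in>C. \<Sum>a\<in>A. if c \<in> R a then 1 else 0)" by (rule sum.swap)
  also have "\<dots> = (\<Sum>c\<in>C. card {a \<in> A. c \<in> R a})"
    using assms(1) by (simp add: sum.inter_filter[symmetric])
  finally show ?thesis .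
qed

lemma le_power_if_increments_le:
  fixes a :: "nat \<Rightarrow> nat"
  assumes "a 0 \<le> 1" and step: "\<And>n. a (Suc n) \<le> a n + C * (n + 1) ^ d"
  shows "a n \<le> 1 + C * n ^ (d + 1)"
proof (induction n)
  case 0
  then show ?case using assms(1) by simp
next
  case (Suc n)
  have "n ^ (d + 1) + (n + 1) ^ d \<le> (n + 1) ^ (d + 1)"
    using mult_le_mono2[OF power_mono[of n "n + 1" d]] by simp
  then have "C * n ^ (d + 1) + C * (n + 1) ^ d \<le> C * (n + 1) ^ (d + 1)"
    using mult_le_mono2[of _ _ C] by (simp add: add_mult_distrib2[symmetric])
  then show ?case using step[of n] Suc.IH by simp
qed

lemma eventually_le_power_if_le_one_plus_power:
  fixes f :: "nat \<Rightarrow> nat"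
  assumes "\<And>n. f n \<le> 1 + C * n ^ d"
  shows "\<exists>C' :: real. \<exists>N. \<forall>n\<ge>N. real (f n) \<le> C' * real n ^ d"
proof -
  have "real (f n) \<le> real (1 + C) * real n ^ d" if "1 \<le> n" for n
  proof -
    define X where "X = n ^ d"
    have "1 \<le> X" using that by (simp add: X_def)
    then have "f n \<le> (1 + C) * X" using assms[of n] by (simp add: X_def distrib_right)
    then have "real (f n) \<le> real ((1 + C) * X)" by (simp only: of_nat_le_iff)
    then show ?thesis by (simp only: X_def of_nat_mult of_nat_power)
  qed
  then show ?thesis by blast
qed

context outer_billiard
begin

subsection \<open>Growth of the number of codes\<close>

lemma card_codes_Suc_le_add:
  "card (codes (Suc n))
    \<le> card (codes n) + p * (1 + 2 * p ^ 2 * card (bounded_int_combinations p (\<lambda>i. 2 * v i) (2 * n)))"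
proof -
  define B where "B = card (bounded_int_combinations p (\<lambda>i. 2 * v i) (2 * n))"
  have "card (codes (Suc n)) \<le> (\<Sum>w\<in>codes n. card (next_letters w))" by (rule card_codes_Suc_le)
  also have "\<dots> \<le> (\<Sum>w\<in>codes n. Suc (card (rays_met w)))" by (intro sum_mono card_next_letters_le)
  also have "\<dots> = card (codes n) + (\<Sum>c<p. card {w \<in> codes n. c \<in> rays_met w})"
    by (simp add: sum_Suc sum_card_eq_sum_card_fibres[OF finite_codes, of "{..<p}"] rays_met_def subset_eq)
  also have "(\<Sum>c<p. card {w \<in> codes n. c \<in> rays_met w}) \<le> (\<Sum>c<p. 1 + 2 * p ^ 2 * B)"
  proof (rule sum_mono)
    fix c assume "c \<in> {..<p}"
    then show "card {w \<in> codes n. c \<in> rays_met w} \<le> 1 + 2 * p ^ 2 * B"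
      using card_codes_meeting_ray_le[of n c] card_root_candidates_le[of n c] by (simp add: B_def)
  qed
  finally show ?thesis by (simp add: B_def)
qed

lemma card_codes_increment_le:
  "\<exists>C. \<forall>n. card (codes (Suc n))
     \<le> card (codes n) + C * (n + 1) ^ (group_rank (side_translation_group p v) + 1)"
proof -
  define d where "d = group_rank (side_translation_group p v) + 1"
  obtain K where K: "\<forall>N. card (bounded_int_combinations p (\<lambda>i. 2 * v i) N) \<le> K * (N + 1) ^ d"
    using card_vertex_combinations_le unfolding d_def by blast
  have "card (codes (Suc n)) \<le> card (codes n) + (p + 2 * p ^ 3 * K * 2 ^ d) * (n + 1) ^ d" for n
  proof -
    have "card (bounded_int_combinations p (\<lambda>i. 2 * v i) (2 * n)) \<le> K * (2 * n + 1) ^ d"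
      using K by blast
    also have "\<dots> \<le> K * (2 ^ d * (n + 1) ^ d)"
    proof -
      have "(2 * n + 1) ^ d \<le> (2 * (n + 1)) ^ d" by (intro power_mono) auto
      also have "\<dots> = 2 ^ d * (n + 1) ^ d" by (rule power_mult_distrib)
      finally show ?thesis by (rule mult_le_mono2)
    qed
    finally have "p * (1 + 2 * p ^ 2 * card (bounded_int_combinations p (\<lambda>i. 2 * v i) (2 * n)))
        \<le> p * (1 + 2 * p ^ 2 * (K * (2 ^ d * (n + 1) ^ d)))"
      by simp
    also have "\<dots> \<le> (p + 2 * p ^ 3 * K * 2 ^ d) * (n + 1) ^ d"
      by (simp add: algebra_simps power3_eq_cube power2_eq_square)
    finally show ?thesis using card_codes_Suc_le_add[of n] by linarith
  qed
  then show ?thesis unfolding d_def by blast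
qed

lemma card_codes_le_power:
  "\<exists>C. \<forall>n. card (codes n) \<le> 1 + C * n ^ (group_rank (side_translation_group p v) + 2)"
proof -
  obtain C where "\<forall>n. card (codes (Suc n))
      \<le> card (codes n) + C * (n + 1) ^ (group_rank (side_translation_group p v) + 1)"
    using card_codes_increment_le by blast
  moreover have "card (codes 0) \<le> 1"
    using card_mono[of "{[]}" "codes 0"] by (auto simp: codes_def)
  ultimately show ?thesis using le_power_if_increments_le[of "\<lambda>n. card (codes n)"] by fastforce
qed

end

theorem mainTheorem13:
  fixes p :: nat and v :: "nat \<Rightarrow> complex"
  assumes "convex_polygon p v"
  shows "\<exists>C::real. \<exists>N. \<forall>n\<ge>N.
           real (complexity p v n) \<le> C * real n ^ (group_rank (side_translation_group p v) + 2)"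
proof -
  interpret outer_billiard p v by unfold_locales (rule assms)
  obtain C where "\<And>n. card (codes n) \<le> 1 + C * n ^ (group_rank (side_translation_group p v) + 2)"
    using card_codes_le_power by blast
  then have "complexity p v n \<le> 1 + C * n ^ (group_rank (side_translation_group p v) + 2)" for n
    using complexity_le_card_codes[of n] by (meson le_trans)
  then show ?thesis by (rule eventually_le_power_if_le_one_plus_power)
qed

end
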